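(* Let $k_0\geq 2$ and let $(\mathscr{G}_{k_0}^{(n)})_{n\geq k_0}$ be a family of CNOT circuits such that each $\mathscr{G}_{k_0}^{(n)}$ is a clean special $k_0$-body generator on $n$ qubits. For $k>k_0$ and $n\geq k$ define recursively $$\mathscr{G}_k^{(n)}:=W_k^{(n)}\odot \mathrm{CX}_{n-k+1,n-k+2}\odot\overline{\mathrm{PTC}}^{(1,n-k+1)},$$ where $W_k^{(k)}:=\mathrm{CX}_{1,2}\odot\mathscr{G}_{k-1}^{(2,k)}$ and, for $n>k$, $W_k^{(n)}:=\mathrm{CX}_{1,2}\odot\mathscr{G}_{k-1}^{(2,n)}\odot\mathrm{SW}_{1,2}\odot W_k^{(2,n)}$. Then $\mathscr{G}_k^{(n)}$ is a clean special $k$-body generator for each $k\geq k_0$. Moreover, if $\operatorname{size}(\mathscr{G}_{k_0}^{(n)})=c_1n^{k_0-1}+\mathcal{O}(n^{k_0-2})$ and $D(\mathscr{G}_{k_0}^{(n)})=c_2n^{k_0-2}+\mathcal{O}(n^{k_0-3})$ for constants $c_1,c_2>0$, then for every $k\geq k_0$ $$\operatorname{size}(\mathscr{G}_k^{(n)})=c_1\frac{(k_0-1)!}{(k-1)!}n^{k-1}+\mathcal{O}(n^{k-2}),\qquad D(\mathscr{G}_k^{(n)})=c_2\frac{(k_0-2)!}{(k-2)!}n^{k-2}+\mathcal{O}(n^{k-3}).$$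
   Context: Qubits are indexed $1,\ldots,n$; $\mathrm{CX}_{i,j}$ ($i\neq j$) is the CNOT gate with control $i$, target $j$. A CNOT circuit is a finite sequence of moments, each a set of CNOT gates on pairwise disjoint qubits; $D(C)$ is the number of moments and $\operatorname{size}(C)$ the number of gates. A single gate also denotes the one-moment circuit containing it. $C_1\odot C_2$ is the circuit consisting of the moments of $C_1$ followed by those of $C_2$. If $C^{(m)}$ is a circuit on qubits $1,\ldots,m$, then for $q-p+1=m$, $C^{(p,q)}$ is the circuit obtained by replacing every gate $\mathrm{CX}_{i,j}$ by $\mathrm{CX}_{i+p-1,j+p-1}$; $\overline{C}^{(p,q)}$ is the circuit obtained from $C^{(p,q)}$ (same moments) by replacing every gate $\mathrm{CX}_{i,j}$ by $\mathrm{CX}_{p+q-i,p+q-j}$. $\mathrm{DX}_{c,t}:=\mathrm{CX}_{t,c}\odot\mathrm{CX}_{c,t}$, $\mathrm{SW}_{c,t}:=\mathrm{CX}_{c,t}\odot\mathrm{CX}_{t,c}\odot\mathrm{CX}_{c,t}$, and the Parity Twine chain is $\mathrm{PTC}^{(m)}:=\mathrm{DX}_{1,2}\odot\mathrm{DX}_{2,3}\odot\cdots\odot\mathrm{DX}_{m-1,m}$ ($\mathrm{PTC}^{(1)}$ is empty). A label is a subset of $\{1,\ldots,n\}$; $ab$ is the symmetric difference of labels $a,b$. A label sequence $\ell=(\ell_1,\ldots,\ell_n)$ is acted on from the right: $\ell\,\mathrm{CX}_{i,j}$ replaces $\ell_j$ by $\ell_i\ell_j$; a moment applies its gates, a circuit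 its moments in order. With $C_{1,m}$ the first $m$ moments, $C$ generates a label $\lambda$ from $\ell$ if $\lambda$ is an entry of $\ell C_{1,m}$ for some $m\in\{1,\ldots,D(C)\}$. A CNOT circuit $C$ on $n\geq k$ qubits is a clean special $k$-body generator if, with $\ell^0=(\{1\},\ldots,\{n\})$: (i) $C$ generates from $\ell^0$ every label $\{1,i_1,\ldots,i_{k-1}\}$ with $1<i_1<\cdots<i_{k-1}\leq n$; and (ii) there is a permutation $\pi$ of $\{1,\ldots,n\}$ with $\pi(1)=1$ such that $\ell^0C=(\{\pi(1)\},\ldots,\{\pi(n)\})$. *)

theory Defs
  imports Main "HOL-Library.Landau_Symbols"
begin

(* A gate (i,j) is CX_{i,j}: control i, target j.  A moment is a set of gates,
   a circuit is a list of moments (first moment first). *)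
type_synonym gate = "nat \<times> nat"
type_synonym moment = "gate set"
type_synonym circuit = "moment list"

definition valid_moment :: "nat \<Rightarrow> moment \<Rightarrow> bool" where
  "valid_moment n M \<longleftrightarrow>
     (\<forall>(i,j)\<in>M. i \<noteq> j \<and> 1 \<le> i \<and> i \<le> n \<and> 1 \<le> j \<and> j \<le> n) \<and>
     (\<forall>g\<in>M. \<forall>h\<in>M. g \<noteq> h \<longrightarrow> {fst g, snd g} \<inter> {fst h, snd h} = {})"

definition valid_circuit :: "nat \<Rightarrow> circuit \<Rightarrow> bool" where
  "valid_circuit n C \<longleftrightarrow> (\<forall>M\<in>set C. valid_moment n M)"

definition depth :: "circuit \<Rightarrow> nat" where
  "depth C = length C"

definition csize :: "circuit \<Rightarrow> nat" where
  "csize C = (\<Sum>M\<leftarrow>C. card M)"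

definition CX :: "nat \<Rightarrow> nat \<Rightarrow> circuit" where
  "CX i j = [{(i,j)}]"

definition DX :: "nat \<Rightarrow> nat \<Rightarrow> circuit" where
  "DX c t = CX t c @ CX c t"

definition SW :: "nat \<Rightarrow> nat \<Rightarrow> circuit" where
  "SW c t = CX c t @ CX t c @ CX c t"

definition PTC :: "nat \<Rightarrow> circuit" where
  "PTC m = concat (map (\<lambda>i. DX i (i+1)) [1..<m])"

definition shift :: "nat \<Rightarrow> circuit \<Rightarrow> circuit" where
  "shift p C = map (\<lambda>M. (\<lambda>(i,j). (i + p - 1, j + p - 1)) ` M) C"

definition mirror :: "nat \<Rightarrow> nat \<Rightarrow> circuit \<Rightarrow> circuit" where
  "mirror p q C = map (\<lambda>M. (\<lambda>(i,j). (p + q - i, p + q - j)) ` M) (shift p C)"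

type_synonym label = "nat set"
type_synonym labelseq = "nat \<Rightarrow> label"

definition symd :: "label \<Rightarrow> label \<Rightarrow> label" where
  "symd a b = (a - b) \<union> (b - a)"

definition apply_moment :: "labelseq \<Rightarrow> moment \<Rightarrow> labelseq" where
  "apply_moment l M = (\<lambda>j. if \<exists>i. (i,j) \<in> M then symd (l (THE i. (i,j) \<in> M)) (l j) else l j)"

definition apply_circuit :: "labelseq \<Rightarrow> circuit \<Rightarrow> labelseq" where
  "apply_circuit l C = foldl apply_moment l C"

definition l0 :: labelseq where
  "l0 = (\<lambda>i. {i})"

definition generates :: "nat \<Rightarrow> circuit \<Rightarrow> labelseq \<Rightarrow> label \<Rightarrow> bool" where
  "generates n C l lam \<longleftrightarrow>
     (\<exists>m\<in>{1..depth C}. \<exists>i\<in>{1..n}. lam = apply_circuit l (take m C) i)"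

definition clean_special_gen :: "nat \<Rightarrow> nat \<Rightarrow> circuit \<Rightarrow> bool" where
  "clean_special_gen k n C \<longleftrightarrow>
     n \<ge> k \<and> valid_circuit n C \<and>
     (\<forall>S. S \<subseteq> {2..n} \<and> card S = k - 1 \<longrightarrow> generates n C l0 (insert 1 S)) \<and>
     (\<exists>\<pi>. bij_betw \<pi> {1..n} {1..n} \<and> \<pi> 1 = 1 \<and>
          (\<forall>i\<in>{1..n}. apply_circuit l0 C i = {\<pi> i}))"

(* W_k^{(n)} given Gp = (n \<mapsto> G_{k-1}^{(n)}) *)
function Wrec :: "(nat \<Rightarrow> circuit) \<Rightarrow> nat \<Rightarrow> nat \<Rightarrow> circuit" where
  "Wrec Gp k n =
     (if n \<le> k then CX 1 2 @ shift 2 (Gp (n - 1))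
      else CX 1 2 @ shift 2 (Gp (n - 1)) @ SW 1 2 @ shift 2 (Wrec Gp k (n - 1)))"
  by pat_completeness auto
termination by (relation "measure (\<lambda>(_,_,n). n)") auto

(* G_k^{(n)} built from the base family G0 = (n \<mapsto> G_{k0}^{(n)}) *)
fun Gk :: "nat \<Rightarrow> (nat \<Rightarrow> circuit) \<Rightarrow> nat \<Rightarrow> nat \<Rightarrow> circuit" where
  "Gk k0 G0 k =
     (if k \<le> k0 then G0
      else (\<lambda>n. Wrec (Gk k0 G0 (k - 1)) k n @ CX (n - k + 1) (n - k + 2)
                  @ mirror 1 (n - k + 1) (PTC (n - k + 1))))"

end

theory Submission
  imports Defs
begin

text \<open>A CNOT adds one label to another, so circuits act GF(2)-linearly on label sequences, and the
  labels produced by a circuit placed on qubits \<open>p, \<dots>, q\<close> are sums of the labels found there,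
  indexed by what the circuit produces from unit labels. By induction on \<open>n\<close>, \<open>W\<^sub>k\<^bsup>(n)\<^esup>\<close> generates
  every label \<open>{1} \<union> S\<close> with \<open>|S| = k - 1\<close>: if \<open>2 \<in> S\<close> already in its head
  \<open>CX\<^sub>1\<^sub>,\<^sub>2 \<odot> G\<^sub>k\<^sub>-\<^sub>1\<^bsup>(2,n)\<^esup>\<close>, otherwise in the shifted copy of \<open>W\<^sub>k\<^bsup>(n-1)\<^esup>\<close>, which after the swap
  sees \<open>{1}\<close> on qubit 2 and a permutation of \<open>{3, \<dots>, n}\<close> above it. It leaves \<open>{1}\<close> on qubit
  \<open>p = n - k + 1\<close>, labels \<open>{1, t}\<close> below \<open>p\<close> and on \<open>p + 1\<close>, and singletons elsewhere; the last
  CNOT and the mirrored Parity Twine chain remove the remaining 1s. Every qubit then holds a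
  singleton, and since CNOT circuits are invertible these singletons form a permutation.

  Size and depth of \<open>G\<^sub>k\<^bsup>(n)\<^esup>\<close> are the sums of those of \<open>G\<^sub>k\<^sub>-\<^sub>1\<^bsup>(m)\<^esup>\<close> over \<open>k - 1 \<le> m < n\<close> plus
  \<open>O(n)\<close>, and summing \<open>c m\<^sup>d + O(m\<^sup>d\<^sup>-\<^sup>1)\<close> gives \<open>c n\<^sup>d\<^sup>+\<^sup>1 / (d + 1) + O(n\<^sup>d)\<close>.\<close>

declare Wrec.simps [simp del] Gk.simps [simp del]

section \<open>Labels and circuits\<close>

lemma l0_apply [simp]: "l0 i = {i}"
  by (simp add: l0_def)

lemma mem_symd_iff: "x \<in> symd a b \<longleftrightarrow> (x \<in> a) \<noteq> (x \<in> b)"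
  by (auto simp: symd_def)

lemma finite_symd [simp]: "finite a \<Longrightarrow> finite b \<Longrightarrow> finite (symd a b)"
  by (simp add: symd_def)

lemma symd_self [simp]: "symd a a = {}"
  by (simp add: symd_def)

text \<open>Labels are vectors over GF(2); \<open>label_sum l A\<close> is the sum of the labels \<open>l i\<close> with \<open>i \<in> A\<close>.\<close>

definition label_sum :: "labelseq \<Rightarrow> nat set \<Rightarrow> label" where
  "label_sum l A = {x. odd (card {i\<in>A. x \<in> l i})}"

lemma label_sum_singleton [simp]: "label_sum l {i} = l i"
proof -
  have "{i'\<in>{i}. x \<in> l i'} = (if x \<in> l i then {i} else {})" for x
    by auto
  then show ?thesis
    unfolding label_sum_def by auto
qed

lemma label_sum_symd:
  assumes "finite A" "finite B"
  shows "symd (label_sum l A) (label_sum l B) = label_sum l (symd A B)"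
proof -
  have "odd (card {i\<in>A. x \<in> l i}) \<noteq> odd (card {i\<in>B. x \<in> l i})
      \<longleftrightarrow> odd (card {i\<in>symd A B. x \<in> l i})" for x
  proof -
    let ?FA = "{i\<in>A. x \<in> l i}" and ?FB = "{i\<in>B. x \<in> l i}"
    let ?FS = "{i\<in>symd A B. x \<in> l i}" and ?FI = "{i\<in>A \<inter> B. x \<in> l i}"
    have "card ?FA + card ?FB = card (?FA \<union> ?FB) + card (?FA \<inter> ?FB)"
      by (rule card_Un_Int) (use assms in auto)
    moreover have "?FA \<union> ?FB = ?FS \<union> ?FI" "?FA \<inter> ?FB = ?FI"
      unfolding symd_def by auto
    moreover have "card (?FS \<union> ?FI) = card ?FS + card ?FI"
      by (rule card_Un_disjoint) (use assms in \<open>auto simp: symd_def\<close>)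
    ultimately have "card ?FA + card ?FB = card ?FS + 2 * card ?FI"
      by simp
    then show ?thesis
      by presburger
  qed
  then show ?thesis
    unfolding label_sum_def by (simp add: set_eq_iff mem_symd_iff)
qed

lemma label_sum_subset: "label_sum l A \<subseteq> (\<Union>i\<in>A. l i)"
proof
  fix x
  assume "x \<in> label_sum l A"
  then have "{i\<in>A. x \<in> l i} \<noteq> {}"
    unfolding label_sum_def by (blast dest: odd_card_imp_not_empty)
  then show "x \<in> (\<Union>i\<in>A. l i)"
    by blast
qed

lemma finite_label_sum:
  "finite A \<Longrightarrow> (\<And>i. i \<in> A \<Longrightarrow> finite (l i)) \<Longrightarrow> finite (label_sum l A)"
  by (rule finite_subset[OF label_sum_subset]) auto

lemma label_sum_disjoint:
  assumes "finite A" "\<And>i j. i \<in> A \<Longrightarrow> j \<in> A \<Longrightarrow> i \<noteq> j \<Longrightarrow> l i \<inter> l j = {}"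
  shows "label_sum l A = (\<Union>i\<in>A. l i)"
proof -
  have "odd (card {i\<in>A. x \<in> l i}) \<longleftrightarrow> (\<exists>i\<in>A. x \<in> l i)" for x
  proof (cases "\<exists>i\<in>A. x \<in> l i")
    case True
    then obtain i where "i \<in> A" "x \<in> l i"
      by blast
    then have "{i\<in>A. x \<in> l i} = {i}"
      using assms(2) by blast
    then show ?thesis
      using True by simp
  next
    case False
    then have "{i\<in>A. x \<in> l i} = {}"
      by blast
    then have "card {i\<in>A. x \<in> l i} = 0"
      by (simp only: card.empty)
    then show ?thesis
      using False by simp
  qed
  then show ?thesis
    unfolding label_sum_def by blast
qed

lemma label_sum_l0: "finite A \<Longrightarrow> label_sum l0 A = A"
  by (subst label_sum_disjoint) auto

lemma label_sum_empty [simp]: "label_sum l {} = {}"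
  by (simp add: label_sum_def)

lemma label_sum_insert:
  assumes "finite A" "a \<notin> A"
  shows "label_sum l (insert a A) = symd (l a) (label_sum l A)"
proof -
  have "symd {a} A = insert a A"
    using assms(2) by (auto simp: symd_def)
  then show ?thesis
    using label_sum_symd[of "{a}" A l] assms(1) by simp
qed

lemma label_sum_singletons:
  assumes "finite A" "inj_on g A" "\<And>i. i \<in> A \<Longrightarrow> l i = {g i}"
  shows "label_sum l A = g ` A"
proof -
  have "label_sum l A = (\<Union>i\<in>A. l i)"
    using assms by (intro label_sum_disjoint) (auto dest: inj_onD)
  then show ?thesis
    using assms(3) by auto
qed

lemma label_sum_label_sum:
  assumes "finite A" "\<And>j. finite (B j)"
  shows "label_sum (\<lambda>j. label_sum l (B j)) A = label_sum l (label_sum B A)"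
  using assms(1)
proof (induction A rule: finite_induct)
  case empty
  then show ?case
    by simp
next
  case (insert a A)
  have "finite (label_sum B A)"
    using insert.hyps assms(2) by (simp add: finite_label_sum)
  then show ?case
    using insert assms(2) by (simp add: label_sum_insert label_sum_symd)
qed

lemma apply_circuit_Nil [simp]: "apply_circuit l [] = l"
  by (simp add: apply_circuit_def)

lemma apply_circuit_Cons: "apply_circuit l (M # C) = apply_circuit (apply_moment l M) C"
  by (simp add: apply_circuit_def)

lemma apply_circuit_append: "apply_circuit l (A @ B) = apply_circuit (apply_circuit l A) B"
  by (simp add: apply_circuit_def)

lemma valid_moment_gateD:
  "valid_moment n M \<Longrightarrow> (i, j) \<in> M \<Longrightarrow> i \<noteq> j \<and> 1 \<le> i \<and> i \<le> n \<and> 1 \<le> j \<and> j \<le> n"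
  unfolding valid_moment_def by fast

lemma valid_moment_disjointD:
  "valid_moment n M \<Longrightarrow> g \<in> M \<Longrightarrow> h \<in> M \<Longrightarrow> g \<noteq> h \<Longrightarrow> {fst g, snd g} \<inter> {fst h, snd h} = {}"
  unfolding valid_moment_def by blast

lemma valid_moment_unique_control:
  "valid_moment n M \<Longrightarrow> (i, j) \<in> M \<Longrightarrow> (i', j) \<in> M \<Longrightarrow> i' = i"
  using valid_moment_disjointD[of n M "(i, j)" "(i', j)"] by auto

lemma valid_moment_target_not_control:
  "valid_moment n M \<Longrightarrow> (i, j) \<in> M \<Longrightarrow> (j, t) \<notin> M"
  using valid_moment_disjointD[of n M "(i, j)" "(j, t)"] valid_moment_gateD[of n M i j] by auto

lemma finite_valid_moment:
  assumes M: "valid_moment n M"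
  shows "finite M"
proof -
  have "M \<subseteq> {1..n} \<times> {1..n}"
    using valid_moment_gateD[OF M] by auto
  then show ?thesis
    by (rule finite_subset) simp
qed

lemma valid_moment_inj_on_fst:
  assumes "valid_moment n M"
  shows "inj_on fst M"
proof (rule inj_onI, rule ccontr)
  fix g h
  assume "g \<in> M" "h \<in> M" "fst g = fst h" "g \<noteq> h"
  then show False
    using valid_moment_disjointD[OF assms, of g h] by auto
qed

lemma apply_moment_gate:
  assumes "valid_moment n M" "(i, j) \<in> M"
  shows "apply_moment l M j = symd (l i) (l j)"
proof -
  have "(THE i. (i, j) \<in> M) = i"
    using assms by (blast intro: the_equality valid_moment_unique_control)
  then show ?thesis
    using assms(2) unfolding apply_moment_def by auto
qed

lemma apply_moment_no_gate: "(\<And>i. (i, j) \<notin> M) \<Longrightarrow> apply_moment l M j = l j"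
  unfolding apply_moment_def by auto

lemma apply_CX: "apply_circuit l (CX i j) = l(j := symd (l i) (l j))"
  by (auto intro!: ext simp: CX_def apply_circuit_Cons apply_moment_def)

lemma apply_SW: "i \<noteq> j \<Longrightarrow> apply_circuit l (SW i j) = l(i := l j, j := l i)"
  unfolding SW_def apply_circuit_append apply_CX by (auto intro!: ext simp: symd_def)

lemma finite_apply_moment: "(\<And>j. finite (l j)) \<Longrightarrow> finite (apply_moment l M j)"
  unfolding apply_moment_def by auto

lemma apply_moment_label_sum:
  assumes "\<And>j. finite (A j)"
  shows "apply_moment (\<lambda>j. label_sum l (A j)) M = (\<lambda>j. label_sum l (apply_moment A M j))"
proof
  fix j
  show "apply_moment (\<lambda>j. label_sum l (A j)) M j = label_sum l (apply_moment A M j)"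
    by (cases "\<exists>i. (i, j) \<in> M") (simp_all add: apply_moment_def label_sum_symd assms)
qed

lemma apply_circuit_label_sum:
  assumes "\<And>j. finite (A j)"
  shows "apply_circuit (\<lambda>j. label_sum l (A j)) C = (\<lambda>j. label_sum l (apply_circuit A C j))"
  using assms
proof (induction C arbitrary: A)
  case Nil
  then show ?case
    by simp
next
  case (Cons M C)
  then show ?case
    by (simp add: apply_circuit_Cons apply_moment_label_sum finite_apply_moment)
qed

lemma apply_circuit_eq_label_sum: "apply_circuit l C j = label_sum l (apply_circuit l0 C j)"
  using apply_circuit_label_sum[of l0 l C] by simp

section \<open>Reversibility\<close>

text \<open>CNOT circuits are invertible, so they preserve linear independence of labels; hence when all
  output labels are singletons they form a permutation.\<close>

definition independent_labels :: "nat \<Rightarrow> labelseq \<Rightarrow> bool" where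
  "independent_labels n l \<longleftrightarrow> (\<forall>A \<subseteq> {1..n}. A \<noteq> {} \<longrightarrow> label_sum l A \<noteq> {})"

lemma independent_labels_l0: "independent_labels n l0"
  unfolding independent_labels_def by (metis finite_atLeastAtMost finite_subset label_sum_l0)

lemma label_sum_moment_l0_nonempty:
  assumes M: "valid_moment n M" and A: "finite A" "A \<noteq> {}"
  shows "label_sum (apply_moment l0 M) A \<noteq> {}"
proof (cases "\<exists>t\<in>A. \<exists>c. (c, t) \<in> M")
  case True
  then obtain t c where t: "t \<in> A" "(c, t) \<in> M"
    by blast
  have "t \<in> apply_moment l0 M t"
    using apply_moment_gate[OF M t(2)] valid_moment_gateD[OF M t(2)] by (simp add: symd_def)
  moreover have "t \<notin> apply_moment l0 M i" if "i \<noteq> t" for i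
  proof (cases "\<exists>c'. (c', i) \<in> M")
    case True
    then obtain c' where c': "(c', i) \<in> M"
      by blast
    then have "c' \<noteq> t"
      using valid_moment_target_not_control[OF M t(2)] by blast
    then show ?thesis
      using apply_moment_gate[OF M c'] that by (simp add: symd_def)
  next
    case False
    then show ?thesis
      using that by (simp add: apply_moment_no_gate)
  qed
  ultimately have "{i\<in>A. t \<in> apply_moment l0 M i} = {t}"
    using t(1) by blast
  then have "t \<in> label_sum (apply_moment l0 M) A"
    unfolding label_sum_def by simp
  then show ?thesis
    by blast
next
  case False
  then have "apply_moment l0 M i = {i}" if "i \<in> A" for i
    using that by (simp add: apply_moment_no_gate)
  then have "label_sum (apply_moment l0 M) A = A"
    using A(1) by (subst label_sum_disjoint) auto
  then show ?thesis
    using A(2) by simp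
qed

lemma independent_labels_apply_moment:
  assumes l: "independent_labels n l" and M: "valid_moment n M"
  shows "independent_labels n (apply_moment l M)"
  unfolding independent_labels_def
proof (intro allI impI)
  fix A
  assume A: "A \<subseteq> {1..n}" "A \<noteq> {}"
  let ?B = "apply_moment l0 M"
  have fin: "finite A"
    using A finite_subset by blast
  have B_sub: "?B j \<subseteq> {1..n}" if "j \<in> {1..n}" for j
  proof (cases "\<exists>i. (i, j) \<in> M")
    case True
    then obtain i where i: "(i, j) \<in> M"
      by blast
    then have "?B j = symd {i} {j}"
      using apply_moment_gate[OF M] by simp
    then show ?thesis
      using valid_moment_gateD[OF M i] by (auto simp: symd_def)
  next
    case False
    then show ?thesis
      using that by (simp add: apply_moment_no_gate)
  qed
  have B: "apply_moment l M = (\<lambda>j. label_sum l (?B j))"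
    using apply_moment_label_sum[of l0 l M] by simp
  have "label_sum (apply_moment l M) A = label_sum l (label_sum ?B A)"
    unfolding B by (rule label_sum_label_sum[OF fin finite_apply_moment]) simp
  moreover have "label_sum ?B A \<subseteq> {1..n}"
    using label_sum_subset[of ?B A] B_sub A by blast
  moreover have "label_sum ?B A \<noteq> {}"
    using label_sum_moment_l0_nonempty[OF M fin] A by blast
  ultimately show "label_sum (apply_moment l M) A \<noteq> {}"
    using l[unfolded independent_labels_def] by metis
qed

lemma independent_labels_apply_circuit:
  "independent_labels n l \<Longrightarrow> valid_circuit n C \<Longrightarrow> independent_labels n (apply_circuit l C)"
proof (induction C arbitrary: l)
  case Nil
  then show ?case
    by simp
next
  case (Cons M C)
  then show ?case
    by (simp add: valid_circuit_def apply_circuit_Cons independent_labels_apply_moment)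
qed

lemma bij_betw_singleton_labels:
  assumes "valid_circuit n C"
    and labels: "\<And>i. i \<in> {1..n} \<Longrightarrow> apply_circuit l0 C i = {\<pi> i}"
    and range: "\<pi> ` {1..n} \<subseteq> {1..n}"
  shows "bij_betw \<pi> {1..n} {1..n}"
proof -
  let ?L = "apply_circuit l0 C"
  have indep: "independent_labels n ?L"
    using independent_labels_apply_circuit[OF independent_labels_l0 assms(1)] .
  have inj: "inj_on \<pi> {1..n}"
  proof (rule inj_onI, rule ccontr)
    fix i j
    assume ij: "i \<in> {1..n}" "j \<in> {1..n}" "\<pi> i = \<pi> j" "i \<noteq> j"
    have "symd {i} {j} = {i, j}"
      using ij(4) by (auto simp: symd_def)
    then have "label_sum ?L {i, j} = symd (?L i) (?L j)"
      using label_sum_symd[of "{i}" "{j}" ?L] by simp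
    also have "\<dots> = {}"
      using labels ij(1-3) by simp
    finally have "label_sum ?L {i, j} = {}" .
    moreover have "{i, j} \<subseteq> {1..n}"
      using ij(1,2) by simp
    ultimately show False
      using indep unfolding independent_labels_def by blast
  qed
  moreover have "\<pi> ` {1..n} = {1..n}"
    using endo_inj_surj[OF _ range inj] by simp
  ultimately show ?thesis
    by (simp add: bij_betw_def)
qed

section \<open>Shifted circuits\<close>

definition shift_moment :: "nat \<Rightarrow> moment \<Rightarrow> moment" where
  "shift_moment q M = (\<lambda>(i, j). (i + q, j + q)) ` M"

lemma shift_eq_map_shift_moment: "1 \<le> p \<Longrightarrow> shift p C = map (shift_moment (p - 1)) C"
  unfolding shift_def shift_moment_def by (intro map_cong refl image_cong) auto

lemma valid_moment_mono:
  assumes M: "valid_moment m M" and "m \<le> n"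
  shows "valid_moment n M"
  unfolding valid_moment_def
proof (intro conjI ballI impI)
  fix g
  assume "g \<in> M"
  then show "case g of (i, j) \<Rightarrow> i \<noteq> j \<and> 1 \<le> i \<and> i \<le> n \<and> 1 \<le> j \<and> j \<le> n"
    using valid_moment_gateD[OF M, of "fst g" "snd g"] \<open>m \<le> n\<close> by (cases g) simp
next
  fix g h
  assume "g \<in> M" "h \<in> M" "g \<noteq> h"
  then show "{fst g, snd g} \<inter> {fst h, snd h} = {}"
    by (rule valid_moment_disjointD[OF M])
qed

lemma valid_moment_shift_moment:
  assumes M: "valid_moment m M"
  shows "valid_moment (m + q) (shift_moment q M)"
  unfolding valid_moment_def
proof (intro conjI ballI impI)
  fix g
  assume "g \<in> shift_moment q M"
  then obtain i j where ij: "(i, j) \<in> M" "g = (i + q, j + q)"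
    unfolding shift_moment_def by auto
  then show "case g of (i, j) \<Rightarrow> i \<noteq> j \<and> 1 \<le> i \<and> i \<le> m + q \<and> 1 \<le> j \<and> j \<le> m + q"
    using valid_moment_gateD[OF M ij(1)] by auto
next
  fix g h
  assume "g \<in> shift_moment q M" "h \<in> shift_moment q M" "g \<noteq> h"
  then obtain i j i' j' where "(i, j) \<in> M" "g = (i + q, j + q)" "(i', j') \<in> M" "h = (i' + q, j' + q)"
    unfolding shift_moment_def by auto
  then show "{fst g, snd g} \<inter> {fst h, snd h} = {}"
    using valid_moment_disjointD[OF M, of "(i, j)" "(i', j')"] \<open>g \<noteq> h\<close> by auto
qed

lemma apply_moment_shift_moment:
  assumes M: "valid_moment m M"
  shows "apply_moment l (shift_moment q M) j =
    (if j < q then l j else apply_moment (\<lambda>i. l (i + q)) M (j - q))"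
proof (cases "j < q")
  case True
  then have "(i, j) \<notin> shift_moment q M" for i
    unfolding shift_moment_def by auto
  then show ?thesis
    using True by (simp add: apply_moment_no_gate)
next
  case False
  then obtain j0 where j: "j = j0 + q"
    by (metis le_add_diff_inverse2 not_less)
  show ?thesis
  proof (cases "\<exists>i. (i, j0) \<in> M")
    case True
    then obtain i where i: "(i, j0) \<in> M"
      by blast
    then have "(i + q, j) \<in> shift_moment q M"
      unfolding shift_moment_def j by force
    then show ?thesis
      using apply_moment_gate[OF valid_moment_shift_moment[OF M]] apply_moment_gate[OF M i] j
      by simp
  next
    case no_gate: False
    then have "(i, j) \<notin> shift_moment q M" for i
      unfolding shift_moment_def j by auto
    then show ?thesis
      using no_gate j by (simp add: apply_moment_no_gate)
  qed
qed

lemma apply_circuit_map_shift_moment: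
  "valid_circuit m C \<Longrightarrow> apply_circuit l (map (shift_moment q) C) j =
    (if j < q then l j else apply_circuit (\<lambda>i. l (i + q)) C (j - q))"
proof (induction C arbitrary: l j)
  case Nil
  then show ?case
    by simp
next
  case (Cons M C)
  then have M: "valid_moment m M" and C: "valid_circuit m C"
    by (auto simp: valid_circuit_def)
  let ?l = "apply_moment l (shift_moment q M)"
  have l_eq: "?l = (\<lambda>a. if a < q then l a else apply_moment (\<lambda>i. l (i + q)) M (a - q))"
    by (rule ext) (simp add: apply_moment_shift_moment[OF M])
  have shifted: "(\<lambda>i. ?l (i + q)) = apply_moment (\<lambda>i. l (i + q)) M"
    by (simp add: l_eq)
  have "apply_circuit l (map (shift_moment q) (M # C)) j = apply_circuit ?l (map (shift_moment q) C) j"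
    by (simp add: apply_circuit_Cons)
  also have "\<dots> = (if j < q then ?l j else apply_circuit (\<lambda>i. ?l (i + q)) C (j - q))"
    by (rule Cons.IH[OF C])
  also have "\<dots> = (if j < q then l j else apply_circuit (\<lambda>i. l (i + q)) (M # C) (j - q))"
    unfolding shifted by (simp add: l_eq apply_circuit_Cons)
  finally show ?case .
qed

lemma apply_circuit_shift:
  assumes "valid_circuit m C" "1 \<le> p"
  shows "apply_circuit l (shift p C) j =
    (if j < p - 1 then l j else apply_circuit (\<lambda>i. l (i + (p - 1))) C (j - (p - 1)))"
  unfolding shift_eq_map_shift_moment[OF assms(2)] by (rule apply_circuit_map_shift_moment[OF assms(1)])

lemma apply_circuit_outside:
  "valid_circuit m C \<Longrightarrow> j = 0 \<or> m < j \<Longrightarrow> apply_circuit l C j = l j"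
proof (induction C arbitrary: l)
  case Nil
  then show ?case
    by simp
next
  case (Cons M C)
  have M: "valid_moment m M" and C: "valid_circuit m C"
    using Cons.prems(1) by (auto simp: valid_circuit_def)
  have "(i, j) \<notin> M" for i
    using valid_moment_gateD[OF M, of i j] Cons.prems(2) by auto
  then have "apply_moment l M j = l j"
    by (simp add: apply_moment_no_gate)
  then show ?case
    using Cons.IH[OF C Cons.prems(2)] by (simp add: apply_circuit_Cons)
qed

lemma apply_circuit_shift_below:
  assumes "valid_circuit m C" "1 \<le> p" "j < p"
  shows "apply_circuit l (shift p C) j = l j"
proof (cases "j < p - 1")
  case True
  then show ?thesis
    using apply_circuit_shift[OF assms(1,2)] by simp
next
  case False
  then have j: "j = p - 1"
    using assms(3) by simp
  then have "apply_circuit l (shift p C) j = apply_circuit (\<lambda>i. l (i + (p - 1))) C 0"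
    using apply_circuit_shift[OF assms(1,2)] by simp
  also have "\<dots> = l j"
    using apply_circuit_outside[OF assms(1)] j by simp
  finally show ?thesis .
qed

lemma apply_circuit_shift_inside:
  assumes "valid_circuit m C" "1 \<le> p" "p \<le> j"
  shows "apply_circuit l (shift p C) j =
    label_sum (\<lambda>i. l (i + (p - 1))) (apply_circuit l0 C (j - (p - 1)))"
proof -
  have "\<not> j < p - 1"
    using assms(3) by simp
  then have "apply_circuit l (shift p C) j = apply_circuit (\<lambda>i. l (i + (p - 1))) C (j - (p - 1))"
    using apply_circuit_shift[OF assms(1,2)] by simp
  then show ?thesis
    by (rule trans[OF _ apply_circuit_eq_label_sum])
qed

lemma valid_circuit_append [simp]:
  "valid_circuit n (A @ B) \<longleftrightarrow> valid_circuit n A \<and> valid_circuit n B"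
  unfolding valid_circuit_def by auto

lemma valid_circuit_concat:
  "(\<And>x. x \<in> set xs \<Longrightarrow> valid_circuit n (f x)) \<Longrightarrow> valid_circuit n (concat (map f xs))"
  unfolding valid_circuit_def by auto

lemma valid_circuit_take: "valid_circuit n C \<Longrightarrow> valid_circuit n (take t C)"
  unfolding valid_circuit_def by (meson in_set_takeD)

lemma valid_circuit_CX:
  "i \<noteq> j \<Longrightarrow> i \<in> {1..n} \<Longrightarrow> j \<in> {1..n} \<Longrightarrow> valid_circuit n (CX i j)"
  by (simp add: valid_circuit_def CX_def valid_moment_def)

lemma valid_circuit_SW:
  "i \<noteq> j \<Longrightarrow> i \<in> {1..n} \<Longrightarrow> j \<in> {1..n} \<Longrightarrow> valid_circuit n (SW i j)"
  by (simp add: SW_def valid_circuit_CX)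

lemma valid_circuit_DX:
  "i \<noteq> j \<Longrightarrow> i \<in> {1..n} \<Longrightarrow> j \<in> {1..n} \<Longrightarrow> valid_circuit n (DX i j)"
  by (simp add: DX_def valid_circuit_CX)

lemma valid_circuit_shift:
  assumes "valid_circuit m C" "1 \<le> p" "p + m - 1 \<le> n"
  shows "valid_circuit n (shift p C)"
  using assms valid_moment_mono[OF valid_moment_shift_moment, of m _ "p - 1" n]
  by (auto simp: valid_circuit_def shift_eq_map_shift_moment)

lemma generates_append_left:
  assumes "generates n C l S"
  shows "generates n (C @ D) l S"
proof -
  obtain t i where t: "t \<in> {1..length C}" "i \<in> {1..n}" "S = apply_circuit l (take t C) i"
    using assms unfolding generates_def depth_def by blast
  then have "S = apply_circuit l (take t (C @ D)) i" "t \<in> {1..length (C @ D)}"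
    by auto
  then show ?thesis
    using t(2) unfolding generates_def depth_def by blast
qed

lemma generates_append_right:
  assumes "generates n D (apply_circuit l C) S"
  shows "generates n (C @ D) l S"
proof -
  obtain t i where t: "t \<in> {1..length D}" "i \<in> {1..n}"
    "S = apply_circuit (apply_circuit l C) (take t D) i"
    using assms unfolding generates_def depth_def by blast
  then have "S = apply_circuit l (take (length C + t) (C @ D)) i"
    "length C + t \<in> {1..length (C @ D)}"
    by (auto simp: apply_circuit_append)
  then show ?thesis
    using t(2) unfolding generates_def depth_def by blast
qed

lemma generates_shift:
  assumes C: "valid_circuit m C" and p: "1 \<le> p" "p + m - 1 \<le> n" and gen: "generates m C l0 A"
  shows "generates n (shift p C) l (label_sum (\<lambda>i. l (i + (p - 1))) A)"
proof -
  obtain t i where t: "t \<in> {1..length C}" "i \<in> {1..m}" "A = apply_circuit l0 (take t C) i"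
    using gen unfolding generates_def depth_def by blast
  have "p \<le> i + (p - 1)"
    using t(2) p(1) by auto
  then have "apply_circuit l (shift p (take t C)) (i + (p - 1)) = label_sum (\<lambda>i. l (i + (p - 1))) A"
    using apply_circuit_shift_inside[OF valid_circuit_take[OF C, of t] p(1)] t(3) by simp
  moreover have "take t (shift p C) = shift p (take t C)"
    unfolding shift_def by (simp add: take_map)
  moreover have "i + (p - 1) \<in> {1..n}" "t \<in> {1..length (shift p C)}"
    using t p by (auto simp: shift_def)
  ultimately show ?thesis
    unfolding generates_def depth_def by metis
qed

lemma clean_special_gen_valid: "clean_special_gen k n C \<Longrightarrow> valid_circuit n C"
  unfolding clean_special_gen_def by blast

lemma clean_special_gen_generates:
  "clean_special_gen k n C \<Longrightarrow> S \<subseteq> {2..n} \<Longrightarrow> card S = k - 1 \<Longrightarrow> generates n C l0 (insert 1 S)"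
  unfolding clean_special_gen_def by blast

section \<open>The recursive construction\<close>

definition generates_k_body :: "nat \<Rightarrow> nat \<Rightarrow> circuit \<Rightarrow> bool" where
  "generates_k_body k n C \<longleftrightarrow>
     (\<forall>S. S \<subseteq> {2..n} \<and> card S = k - 1 \<longrightarrow> generates n C l0 (insert 1 S))"

definition outputs_permutation :: "nat \<Rightarrow> circuit \<Rightarrow> (nat \<Rightarrow> nat) \<Rightarrow> bool" where
  "outputs_permutation n C \<pi> \<longleftrightarrow>
     bij_betw \<pi> {1..n} {1..n} \<and> \<pi> 1 = 1 \<and> (\<forall>i\<in>{1..n}. apply_circuit l0 C i = {\<pi> i})"

lemma clean_special_gen_iff:
  "clean_special_gen k n C \<longleftrightarrow>
     k \<le> n \<and> valid_circuit n C \<and> generates_k_body k n C \<and> (\<exists>\<pi>. outputs_permutation n C \<pi>)"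
  unfolding clean_special_gen_def generates_k_body_def outputs_permutation_def by blast

lemma generates_k_body_append_left: "generates_k_body k n C \<Longrightarrow> generates_k_body k n (C @ D)"
  unfolding generates_k_body_def by (blast intro: generates_append_left)

lemma outputs_permutation_inj: "outputs_permutation n C \<pi> \<Longrightarrow> inj_on \<pi> {1..n}"
  unfolding outputs_permutation_def by (blast dest: bij_betw_imp_inj_on)

lemma outputs_permutation_apply:
  "outputs_permutation n C \<pi> \<Longrightarrow> i \<in> {1..n} \<Longrightarrow> apply_circuit l0 C i = {\<pi> i}"
  unfolding outputs_permutation_def by blast

lemma outputs_permutation_range:
  "outputs_permutation n C \<pi> \<Longrightarrow> i \<in> {1..n} \<Longrightarrow> \<pi> i \<in> {1..n}"
  unfolding outputs_permutation_def by (blast dest: bij_betwE)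

lemma outputs_permutation_range_ge_2:
  assumes "outputs_permutation n C \<pi>" "i \<in> {2..n}"
  shows "\<pi> i \<in> {2..n}"
proof -
  have "\<pi> i \<noteq> \<pi> 1"
    using assms inj_onD[OF outputs_permutation_inj[OF assms(1)], of i 1] by auto
  then show ?thesis
    using assms outputs_permutation_range[OF assms(1), of i] unfolding outputs_permutation_def by auto
qed

lemma outputs_permutation_image:
  assumes "outputs_permutation n C \<pi>"
  shows "\<pi> ` {2..n} = {2..n}"
proof (rule endo_inj_surj)
  show "\<pi> ` {2..n} \<subseteq> {2..n}"
    using outputs_permutation_range_ge_2[OF assms] by blast
  show "inj_on \<pi> {2..n}"
    using outputs_permutation_inj[OF assms] by (rule inj_on_subset) auto
qed simp

definition head_block :: "circuit \<Rightarrow> circuit" where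
  "head_block G = CX 1 2 @ shift 2 G"

lemma valid_head_block: "valid_circuit (n - 1) G \<Longrightarrow> 2 \<le> n \<Longrightarrow> valid_circuit n (head_block G)"
  unfolding head_block_def by (auto intro!: valid_circuit_CX valid_circuit_shift)

lemma apply_CX_1_2_l0: "apply_circuit l0 (CX 1 2) = l0(2 := {1, 2})"
  by (auto simp: apply_CX symd_def intro!: ext)

lemma apply_head_block:
  assumes G: "valid_circuit (n - 1) G" and \<pi>: "outputs_permutation (n - 1) G \<pi>" and j: "j \<in> {1..n}"
  shows "apply_circuit l0 (head_block G) j =
    (if j = 1 then {1} else if j = 2 then {1, 2} else {\<pi> (j - 1) + 1})"
proof -
  let ?l = "l0(2 := {1, 2})"
  have "apply_circuit l0 (head_block G) j = apply_circuit ?l (shift 2 G) j"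
    unfolding head_block_def apply_circuit_append apply_CX_1_2_l0 ..
  moreover have "apply_circuit ?l (shift 2 G) j = ?l (\<pi> (j - 1) + 1)" if "j \<ge> 2"
  proof -
    have "j - 1 \<in> {1..n - 1}"
      using j that by auto
    then show ?thesis
      using apply_circuit_shift_inside[OF G _ that, of ?l] outputs_permutation_apply[OF \<pi>] by simp
  qed
  moreover have "\<pi> (j - 1) \<in> {2..n - 1}" if "j \<ge> 3"
  proof -
    have "j - 1 \<in> {2..n - 1}"
      using j that by auto
    then show ?thesis
      by (rule outputs_permutation_range_ge_2[OF \<pi>])
  qed
  ultimately show ?thesis
    using apply_circuit_shift_below[OF G, of 2 1 ?l] \<pi> j unfolding outputs_permutation_def
    by (auto simp: numeral_eq_Suc)
qed

lemma head_block_generates: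
  assumes G: "clean_special_gen (k - 1) (n - 1) G" and T: "T \<subseteq> {2..n}" "2 \<in> T" "card T = k - 1"
  shows "generates n (head_block G) l0 (insert 1 T)"
proof -
  let ?l = "l0(2 := {1, 2})"
  define S where "S = (\<lambda>t. t - 1) ` (T - {2})"
  have T3: "T - {2} \<subseteq> {3..n}"
    using T by auto
  have fin: "finite T"
    using T(1) finite_subset by blast
  have inj: "inj_on (\<lambda>t. t - 1) (T - {2})"
    by (rule inj_onI) (use T3 in force)
  have S_sub: "S \<subseteq> {2..n - 1}"
    unfolding S_def using T3 by force
  have shift_S: "Suc ` S = T - {2}"
    unfolding S_def image_image using T3 by (force simp: image_iff)
  have "card S = k - 1 - 1"
    unfolding S_def card_image[OF inj] using T fin by simp
  then have gen: "generates (n - 1) G l0 (insert 1 S)"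
    by (rule clean_special_gen_generates[OF G S_sub])
  have "2 \<le> n"
    using T by auto
  then have "generates n (shift 2 G) ?l (label_sum (\<lambda>i. ?l (i + (2 - 1))) (insert 1 S))"
    by (intro generates_shift[OF clean_special_gen_valid[OF G] _ _ gen]) auto
  moreover have "label_sum (\<lambda>i. ?l (i + (2 - 1))) (insert 1 S) = insert 1 T"
  proof -
    have "finite S" "1 \<notin> S"
      using S_sub by (auto intro: finite_subset)
    moreover have "label_sum (\<lambda>i. ?l (i + 1)) S = (\<lambda>i. i + 1) ` S"
      using S_sub \<open>finite S\<close> by (intro label_sum_singletons) auto
    ultimately have "label_sum (\<lambda>i. ?l (i + (2 - 1))) (insert 1 S) = symd {1, 2} (T - {2})"
      by (simp add: label_sum_insert shift_S)
    then show ?thesis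
      using T(1,2) by (auto simp: symd_def)
  qed
  ultimately show ?thesis
    unfolding head_block_def using generates_append_right apply_CX_1_2_l0 by metis
qed

text \<open>The labels left by \<open>W\<^sub>k\<^bsup>(n)\<^esup>\<close>, with \<open>p = n - k + 1\<close>.\<close>

definition W_output :: "nat \<Rightarrow> nat \<Rightarrow> labelseq \<Rightarrow> bool" where
  "W_output n p L \<longleftrightarrow>
     L p = {1} \<and> (\<forall>i\<in>{1..n} - {p}. \<exists>t\<in>{2..n}. L i = (if i \<le> p + 1 then {1, t} else {t}))"

lemma W_outputE:
  assumes "W_output n p L"
  obtains \<tau> where "L p = {1}" "\<And>i. i \<in> {1..n} - {p} \<Longrightarrow> \<tau> i \<in> {2..n}"
    "\<And>i. i \<in> {1..n} - {p} \<Longrightarrow> L i = (if i \<le> p + 1 then {1, \<tau> i} else {\<tau> i})"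
proof -
  have "\<forall>i\<in>{1..n} - {p}. \<exists>t. t \<in> {2..n} \<and> L i = (if i \<le> p + 1 then {1, t} else {t})"
    using assms unfolding W_output_def by blast
  then obtain \<tau> where "\<forall>i\<in>{1..n} - {p}. \<tau> i \<in> {2..n} \<and> L i = (if i \<le> p + 1 then {1, \<tau> i} else {\<tau> i})"
    by (metis bchoice)
  then show ?thesis
    using that assms unfolding W_output_def by blast
qed

lemma W_output_head_block:
  assumes G: "valid_circuit (n - 1) G" "outputs_permutation (n - 1) G \<pi>" and n: "2 \<le> n"
  shows "W_output n 1 (apply_circuit l0 (head_block G))"
proof -
  let ?L = "apply_circuit l0 (head_block G)"
  have L: "?L i = (if i = 1 then {1} else if i = 2 then {1, 2} else {\<pi> (i - 1) + 1})"
    if "i \<in> {1..n}" for i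
    using apply_head_block[OF G] that by simp
  have "\<exists>t\<in>{2..n}. ?L i = (if i \<le> 1 + 1 then {1, t} else {t})" if i: "i \<in> {1..n} - {1}" for i
  proof (cases "i = 2")
    case True
    then have "?L i = {1, 2}"
      using L[of 2] n by simp
    then show ?thesis
      using True n by (intro bexI[of _ 2]) auto
  next
    case False
    then have "i - 1 \<in> {1..n - 1}"
      using i by auto
    then have "\<pi> (i - 1) \<in> {1..n - 1}"
      by (rule outputs_permutation_range[OF G(2)])
    then have "\<pi> (i - 1) + 1 \<in> {2..n}"
      by auto
    moreover have "\<not> i \<le> 1 + 1"
      using i False by auto
    then have "?L i = (if i \<le> 1 + 1 then {1, \<pi> (i - 1) + 1} else {\<pi> (i - 1) + 1})"
      using L[of i] i by simp
    ultimately show ?thesis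
      by (rule bexI[rotated])
  qed
  moreover have "?L 1 = {1}"
    using L[of 1] n by simp
  ultimately show ?thesis
    unfolding W_output_def by blast
qed

lemma Wrec_base_invariant:
  assumes G: "clean_special_gen (k - 1) (k - 1) G" and k: "3 \<le> k"
  shows "valid_circuit k (head_block G) \<and> generates_k_body k k (head_block G) \<and>
    W_output k 1 (apply_circuit l0 (head_block G))"
proof (intro conjI)
  obtain \<pi> where \<pi>: "outputs_permutation (k - 1) G \<pi>" and vG: "valid_circuit (k - 1) G"
    using G unfolding clean_special_gen_iff by blast
  show "valid_circuit k (head_block G)"
    using valid_head_block[OF vG] k by simp
  show "W_output k 1 (apply_circuit l0 (head_block G))"
    using W_output_head_block[OF vG \<pi>] k by simp
  show "generates_k_body k k (head_block G)"
    unfolding generates_k_body_def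
  proof (intro allI impI)
    fix T
    assume T: "T \<subseteq> {2..k} \<and> card T = k - 1"
    then have "T = {2..k}"
      by (intro card_subset_eq) auto
    then show "generates k (head_block G) l0 (insert 1 T)"
      using head_block_generates[OF G] T k by simp
  qed
qed

lemma Wrec_le: "n \<le> k \<Longrightarrow> Wrec Gp k n = head_block (Gp (n - 1))"
  by (subst Wrec.simps) (simp add: head_block_def)

lemma Wrec_gt:
  "k < n \<Longrightarrow> Wrec Gp k n = head_block (Gp (n - 1)) @ SW 1 2 @ shift 2 (Wrec Gp k (n - 1))"
  by (subst Wrec.simps) (simp add: head_block_def)

lemma Gk_le: "k \<le> k0 \<Longrightarrow> Gk k0 G0 k = G0"
  by (subst Gk.simps) simp

lemma Gk_gt: "k0 < k \<Longrightarrow> Gk k0 G0 k n =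
    Wrec (Gk k0 G0 (k - 1)) k n @ CX (n - k + 1) (n - k + 2) @ mirror 1 (n - k + 1) (PTC (n - k + 1))"
  by (subst Gk.simps) simp

lemma apply_head_block_SW:
  assumes G: "valid_circuit n G" "outputs_permutation n G \<pi>" and n: "1 \<le> n" and j: "j \<in> {1..Suc n}"
  shows "apply_circuit l0 (head_block G @ SW 1 2) j =
    (if j = 1 then {1, 2} else if j = 2 then {1} else {\<pi> (j - 1) + 1})"
proof -
  have H: "apply_circuit l0 (head_block G) i =
      (if i = 1 then {1} else if i = 2 then {1, 2} else {\<pi> (i - 1) + 1})" if "i \<in> {1..Suc n}" for i
    using apply_head_block[of "Suc n" G \<pi> i] G that by simp
  have "apply_circuit l (SW 1 2) = l(1 := l 2, 2 := l 1)" for l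
    by (simp add: apply_SW)
  then show ?thesis
    unfolding apply_circuit_append using H[of 1] H[of 2] H[OF j] n by simp
qed

lemma label_sum_head_block_SW:
  assumes G: "valid_circuit n G" "outputs_permutation n G \<pi>" and n: "1 \<le> n" and A: "A \<subseteq> {2..n}"
  defines "l \<equiv> \<lambda>i. apply_circuit l0 (head_block G @ SW 1 2) (i + 1)"
  shows "label_sum l A = (\<lambda>i. \<pi> i + 1) ` A"
    and "label_sum l (insert 1 A) = insert 1 ((\<lambda>i. \<pi> i + 1) ` A)"
proof -
  have fin: "finite A" "1 \<notin> A"
    using A by (auto intro: finite_subset)
  have "inj_on (\<lambda>i. \<pi> i + 1) A"
  proof (rule inj_onI)
    fix x y
    assume "x \<in> A" "y \<in> A" "\<pi> x + 1 = \<pi> y + 1"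
    then have "x \<in> {1..n}" "y \<in> {1..n}" "\<pi> x = \<pi> y"
      using A by auto
    then show "x = y"
      using inj_onD[OF outputs_permutation_inj[OF G(2)]] by blast
  qed
  moreover have "l i = {\<pi> i + 1}" if "i \<in> A" for i
    using apply_head_block_SW[OF G n, of "i + 1"] that A unfolding l_def by auto
  ultimately show sum: "label_sum l A = (\<lambda>i. \<pi> i + 1) ` A"
    by (rule label_sum_singletons[OF fin(1)])
  have "l 1 = {1}"
    using apply_head_block_SW[OF G n, of 2] n unfolding l_def by (simp add: numeral_2_eq_2)
  moreover have "1 \<notin> (\<lambda>i. \<pi> i + 1) ` A"
  proof
    assume "1 \<in> (\<lambda>i. \<pi> i + 1) ` A"
    then obtain i where "i \<in> A" "\<pi> i + 1 = 1"
      by auto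
    then show False
      using outputs_permutation_range_ge_2[OF G(2), of i] A by auto
  qed
  ultimately show "label_sum l (insert 1 A) = insert 1 ((\<lambda>i. \<pi> i + 1) ` A)"
    using fin sum by (simp add: label_sum_insert symd_def insert_Diff_if)
qed

lemma W_output_step:
  assumes G: "valid_circuit n G" "outputs_permutation n G \<pi>"
    and W: "valid_circuit n W" "W_output n p (apply_circuit l0 W)" and p: "p \<in> {1..n}"
  shows "W_output (Suc n) (Suc p) (apply_circuit l0 (head_block G @ SW 1 2 @ shift 2 W))"
proof -
  let ?L = "apply_circuit l0 (head_block G @ SW 1 2 @ shift 2 W)" and ?L' = "apply_circuit l0 W"
  define l where "l = (\<lambda>i. apply_circuit l0 (head_block G @ SW 1 2) (i + 1))"
  have n: "1 \<le> n"
    using p by simp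
  have L: "?L j = label_sum l (?L' (j - 1))" if "2 \<le> j" for j
    using apply_circuit_shift_inside[OF W(1), of 2 j] that by (simp add: apply_circuit_append l_def)
  obtain \<tau> where L'p: "?L' p = {1}" and \<tau>: "\<And>i. i \<in> {1..n} - {p} \<Longrightarrow> \<tau> i \<in> {2..n}"
    and L'\<tau>: "\<And>i. i \<in> {1..n} - {p} \<Longrightarrow> ?L' i = (if i \<le> p + 1 then {1, \<tau> i} else {\<tau> i})"
    using W(2) by (rule W_outputE) blast
  have "?L (Suc p) = {1}"
    using L[of "Suc p"] L'p label_sum_head_block_SW(2)[OF G n, of "{}"] p by (simp add: l_def)
  moreover have "\<exists>t\<in>{2..Suc n}. ?L i = (if i \<le> Suc p + 1 then {1, t} else {t})"
    if i: "i \<in> {1..Suc n} - {Suc p}" for i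
  proof (cases "i = 1")
    case True
    then have "?L i = (if i \<le> Suc p + 1 then {1, 2} else {2})"
      using apply_circuit_shift_below[OF W(1), of 2 1] apply_head_block_SW[OF G n, of 1]
      by (simp add: apply_circuit_append)
    moreover have "(2::nat) \<in> {2..Suc n}"
      using n by simp
    ultimately show ?thesis
      by (rule bexI)
  next
    case False
    then have i': "i - 1 \<in> {1..n} - {p}" "2 \<le> i" "i - 1 \<le> p + 1 \<longleftrightarrow> i \<le> Suc p + 1"
      using i by auto
    have "\<pi> (\<tau> (i - 1)) \<in> {2..n}"
      by (rule outputs_permutation_range_ge_2[OF G(2) \<tau>[OF i'(1)]])
    moreover have "label_sum l (insert 1 {\<tau> (i - 1)}) = {1, \<pi> (\<tau> (i - 1)) + 1}"
      "label_sum l {\<tau> (i - 1)} = {\<pi> (\<tau> (i - 1)) + 1}"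
      using label_sum_head_block_SW[OF G n, of "{\<tau> (i - 1)}"] \<tau>[OF i'(1)] unfolding l_def by simp_all
    ultimately show ?thesis
      using L[OF i'(2)] L'\<tau>[OF i'(1)] i'(3) by (intro bexI[of _ "\<pi> (\<tau> (i - 1)) + 1"]) auto
  qed
  ultimately show ?thesis
    unfolding W_output_def by blast
qed

lemma outputs_permutation_preimage:
  assumes \<pi>: "outputs_permutation n G \<pi>" and T: "T \<subseteq> {3..Suc n}"
  obtains S where "S \<subseteq> {2..n}" "card S = card T" "(\<lambda>i. \<pi> i + 1) ` S = T"
proof -
  define f where "f = (\<lambda>i. \<pi> i + 1)"
  have f_inj: "inj_on f {2..n}"
  proof (rule inj_onI)
    fix x y
    assume "x \<in> {2..n}" "y \<in> {2..n}" "f x = f y"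
    then show "x = y"
      using inj_onD[OF outputs_permutation_inj[OF \<pi>], of x y] by (simp add: f_def)
  qed
  have "f ` {2..n} = Suc ` \<pi> ` {2..n}"
    unfolding f_def by (auto simp: image_image)
  then have f_image: "f ` {2..n} = {3..Suc n}"
    using outputs_permutation_image[OF \<pi>] by (simp add: image_Suc_atLeastAtMost)
  define S where "S = {i\<in>{2..n}. f i \<in> T}"
  have S: "S \<subseteq> {2..n}"
    unfolding S_def by blast
  have fS: "f ` S = T"
  proof
    show "f ` S \<subseteq> T"
      unfolding S_def by blast
    show "T \<subseteq> f ` S"
    proof
      fix t
      assume "t \<in> T"
      then obtain i where "i \<in> {2..n}" "t = f i"
        using f_image T by blast
      then show "t \<in> f ` S"
        unfolding S_def using \<open>t \<in> T\<close> by blast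
    qed
  qed
  moreover have "card S = card T"
    using card_image[OF inj_on_subset[OF f_inj S]] fS by simp
  ultimately show ?thesis
    using that S unfolding f_def by blast
qed

lemma generates_k_body_step:
  assumes G: "clean_special_gen (k - 1) n G" and W: "valid_circuit n W" "generates_k_body k n W"
    and k: "2 \<le> k"
  shows "generates_k_body k (Suc n) (head_block G @ SW 1 2 @ shift 2 W)"
  unfolding generates_k_body_def
proof (intro allI impI)
  fix T
  assume T: "T \<subseteq> {2..Suc n} \<and> card T = k - 1"
  obtain \<pi> where \<pi>: "outputs_permutation n G \<pi>" and vG: "valid_circuit n G" and n: "1 \<le> n"
    using G k unfolding clean_special_gen_iff by auto
  let ?l = "apply_circuit l0 (head_block G @ SW 1 2)"
  show "generates (Suc n) (head_block G @ SW 1 2 @ shift 2 W) l0 (insert 1 T)"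
  proof (cases "2 \<in> T")
    case True
    have "generates (Suc n) (head_block G) l0 (insert 1 T)"
      using head_block_generates[of k "Suc n" G T] G T True by simp
    then show ?thesis
      by (rule generates_append_left)
  next
    case False
    have "T \<subseteq> {3..Suc n}"
    proof
      fix t
      assume "t \<in> T"
      then have "t \<in> {2..Suc n}" "t \<noteq> 2"
        using T False by blast+
      then show "t \<in> {3..Suc n}"
        by auto
    qed
    then obtain S where S: "S \<subseteq> {2..n}" "card S = k - 1" and ST: "(\<lambda>i. \<pi> i + 1) ` S = T"
      using T by (metis outputs_permutation_preimage[OF \<pi>])
    then have "generates n W l0 (insert 1 S)"
      using W(2) unfolding generates_k_body_def by blast
    then have "generates (Suc n) (shift 2 W) ?l (label_sum (\<lambda>i. ?l (i + (2 - 1))) (insert 1 S))"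
      by (intro generates_shift[OF W(1)]) auto
    moreover have "label_sum (\<lambda>i. ?l (i + (2 - 1))) (insert 1 S) = insert 1 T"
      using label_sum_head_block_SW(2)[OF vG \<pi> n S(1)] ST by simp
    ultimately have "generates (Suc n) ((head_block G @ SW 1 2) @ shift 2 W) l0 (insert 1 T)"
      by (intro generates_append_right) simp
    then show ?thesis
      by simp
  qed
qed

lemma Wrec_invariant:
  assumes k: "3 \<le> k" and Gp: "\<forall>m\<ge>k - 1. clean_special_gen (k - 1) m (Gp m)" and n: "k \<le> n"
  shows "valid_circuit n (Wrec Gp k n) \<and> generates_k_body k n (Wrec Gp k n) \<and>
    W_output n (n - k + 1) (apply_circuit l0 (Wrec Gp k n))"
  using n
proof (induction n rule: dec_induct)
  case base
  have "Wrec Gp k k = head_block (Gp (k - 1))"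
    by (rule Wrec_le) simp
  moreover have "k - k + 1 = 1"
    by simp
  moreover have "clean_special_gen (k - 1) (k - 1) (Gp (k - 1))"
    using Gp by simp
  ultimately show ?case
    using Wrec_base_invariant k by metis
next
  case (step n)
  have G: "clean_special_gen (k - 1) n (Gp n)"
    using Gp step.hyps by simp
  then obtain \<pi> where \<pi>: "outputs_permutation n (Gp n) \<pi>" and vG: "valid_circuit n (Gp n)"
    unfolding clean_special_gen_iff by blast
  have W: "Wrec Gp k (Suc n) = head_block (Gp n) @ SW 1 2 @ shift 2 (Wrec Gp k n)"
    using Wrec_gt[of k "Suc n"] step.hyps by simp
  have vW: "valid_circuit n (Wrec Gp k n)" and gW: "generates_k_body k n (Wrec Gp k n)"
    and oW: "W_output n (n - k + 1) (apply_circuit l0 (Wrec Gp k n))"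
    using step.IH by blast+
  have "valid_circuit (Suc n) (Wrec Gp k (Suc n))"
    unfolding W using valid_head_block[of "Suc n" "Gp n"] vG step.hyps k
    by (auto intro!: valid_circuit_SW valid_circuit_shift[OF vW])
  moreover have "generates_k_body k (Suc n) (Wrec Gp k (Suc n))"
    unfolding W using generates_k_body_step[OF G vW gW] k by simp
  moreover have "Suc n - k + 1 = Suc (n - k + 1)"
    using step.hyps by simp
  moreover have "W_output (Suc n) (Suc (n - k + 1)) (apply_circuit l0 (Wrec Gp k (Suc n)))"
    unfolding W using W_output_step[OF vG \<pi> vW oW] step.hyps k by simp
  ultimately show ?case
    by metis
qed

section \<open>The final Parity Twine chain\<close>

definition DX_chain_down :: "nat \<Rightarrow> circuit" where
  "DX_chain_down p = concat (map (\<lambda>i. DX (p + 1 - i) (p - i)) [1..<p])"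

lemma mirror_PTC: "mirror 1 p (PTC p) = DX_chain_down p"
proof -
  have shift1: "shift 1 C = C" for C
    unfolding shift_def by (simp add: case_prod_beta)
  have "map ((`) (\<lambda>(i, j). (1 + p - i, 1 + p - j))) (DX i (i + 1)) = DX (p + 1 - i) (p - i)"
    if "i \<in> set [1..<p]" for i
    using that by (simp add: DX_def CX_def)
  then show ?thesis
    unfolding mirror_def shift1 PTC_def DX_chain_down_def map_concat map_map
    by (intro arg_cong[where f = concat] map_cong) (simp_all add: o_def)
qed

lemma DX_chain_down_Suc:
  assumes "1 \<le> q"
  shows "DX_chain_down (Suc q) = DX (Suc q) q @ DX_chain_down q"
proof -
  have "[1..<Suc q] = 1 # map Suc [1..<q]"
    using assms by (simp add: upt_conv_Cons map_Suc_upt)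
  then show ?thesis
    unfolding DX_chain_down_def by (simp add: o_def)
qed

lemma valid_circuit_DX_chain_down: "p \<le> n \<Longrightarrow> valid_circuit n (DX_chain_down p)"
  unfolding DX_chain_down_def by (intro valid_circuit_concat valid_circuit_DX) auto

lemma apply_DX_chain_down:
  assumes "1 \<le> q" "\<forall>i. 1 \<le> i \<and> i < q \<longrightarrow> s i = {1, c i} \<and> c i \<noteq> 1" "s q = {1}"
  shows "apply_circuit s (DX_chain_down q) =
    (\<lambda>j. if j = 1 then {1} else if 2 \<le> j \<and> j \<le> q then {c (j - 1)} else s j)"
  using assms
proof (induction q arbitrary: s)
  case 0
  then show ?case
    by simp
next
  case (Suc q)
  show ?case
  proof (cases "q = 0")
    case True
    have "s 1 = {1}"
      using Suc.prems(3) True by simp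
    moreover have "DX_chain_down (Suc q) = []"
      using True by (simp add: DX_chain_down_def)
    ultimately show ?thesis
      using True by (intro ext) simp
  next
    case False
    then have q: "1 \<le> q"
      by simp
    have sq: "s q = {1, c q}" "c q \<noteq> 1"
      using Suc.prems(2) q by auto
    define s' where "s' = s(Suc q := {c q}, q := {1})"
    have "apply_circuit s (DX (Suc q) q) = s(Suc q := {c q}, q := symd {c q} {1, c q})"
      unfolding DX_def apply_circuit_append apply_CX
      by (rule ext) (use sq Suc.prems(3) in \<open>auto simp: symd_def\<close>)
    moreover have "symd {c q} {1, c q} = {1}"
      using sq(2) by (auto simp: symd_def)
    ultimately have DX: "apply_circuit s (DX (Suc q) q) = s'"
      unfolding s'_def by simp
    have "\<forall>i. 1 \<le> i \<and> i < q \<longrightarrow> s' i = {1, c i} \<and> c i \<noteq> 1" "s' q = {1}"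
      using Suc.prems(2) by (simp_all add: s'_def)
    then have IH: "apply_circuit s' (DX_chain_down q) =
        (\<lambda>j. if j = 1 then {1} else if 2 \<le> j \<and> j \<le> q then {c (j - 1)} else s' j)"
      by (rule Suc.IH[OF q])
    show ?thesis
      unfolding DX_chain_down_Suc[OF q] apply_circuit_append DX IH
    proof
      fix j
      show "(if j = 1 then {1} else if 2 \<le> j \<and> j \<le> q then {c (j - 1)} else s' j) =
        (if j = 1 then {1} else if 2 \<le> j \<and> j \<le> Suc q then {c (j - 1)} else s j)"
        using q by (cases "j = Suc q") (simp_all add: s'_def)
    qed
  qed
qed

lemma apply_CX_DX_chain_down:
  assumes Lp: "L p = {1}" and \<tau>: "\<And>i. i \<in> {1..n} - {p} \<Longrightarrow> \<tau> i \<in> {2..n}"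
    and L\<tau>: "\<And>i. i \<in> {1..n} - {p} \<Longrightarrow> L i = (if i \<le> p + 1 then {1, \<tau> i} else {\<tau> i})"
    and p: "1 \<le> p" "p + 1 \<le> n" and j: "j \<in> {1..n}"
  shows "apply_circuit L (CX p (p + 1) @ DX_chain_down p) j =
    {if j = 1 then 1 else if j \<le> p then \<tau> (j - 1) else \<tau> j}"
proof -
  define s where "s = L(p + 1 := {\<tau> (p + 1)})"
  have "L (p + 1) = {1, \<tau> (p + 1)}" "\<tau> (p + 1) \<noteq> 1"
    using L\<tau>[of "p + 1"] \<tau>[of "p + 1"] p by auto
  then have "symd (L p) (L (p + 1)) = {\<tau> (p + 1)}"
    using Lp by (auto simp: symd_def)
  then have s: "apply_circuit L (CX p (p + 1)) = s"
    unfolding s_def apply_CX by simp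
  have "\<forall>i. 1 \<le> i \<and> i < p \<longrightarrow> s i = {1, \<tau> i} \<and> \<tau> i \<noteq> 1"
  proof (intro allI impI)
    fix i
    assume "1 \<le> i \<and> i < p"
    then have "i \<in> {1..n} - {p}" "i \<le> p + 1" "i \<noteq> p + 1"
      using p by auto
    then show "s i = {1, \<tau> i} \<and> \<tau> i \<noteq> 1"
      using L\<tau>[of i] \<tau>[of i] unfolding s_def by auto
  qed
  moreover have "s p = {1}"
    using Lp by (simp add: s_def)
  ultimately have final: "apply_circuit L (CX p (p + 1) @ DX_chain_down p) =
      (\<lambda>j. if j = 1 then {1} else if 2 \<le> j \<and> j \<le> p then {\<tau> (j - 1)} else s j)"
    unfolding apply_circuit_append s by (rule apply_DX_chain_down[OF p(1)])
  have "j = 1 \<or> 2 \<le> j \<and> j \<le> p \<or> j = p + 1 \<or> p + 1 < j"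
    using j by auto
  then consider "j = 1" | "2 \<le> j" "j \<le> p" | "j = p + 1" | "p + 1 < j"
    by blast
  then show ?thesis
  proof cases
    case 3
    then show ?thesis
      using p unfolding final s_def by simp
  next
    case 4
    then show ?thesis
      using L\<tau>[of j] j p unfolding final s_def by simp
  qed (unfold final, auto)
qed

lemma W_output_untwine:
  assumes L: "W_output n p L" and p: "1 \<le> p" "p + 1 \<le> n"
  obtains \<pi> where "\<pi> 1 = 1" "\<pi> ` {1..n} \<subseteq> {1..n}"
    "\<And>j. j \<in> {1..n} \<Longrightarrow> apply_circuit L (CX p (p + 1) @ DX_chain_down p) j = {\<pi> j}"
proof -
  obtain \<tau> where Lp: "L p = {1}" and \<tau>: "\<And>i. i \<in> {1..n} - {p} \<Longrightarrow> \<tau> i \<in> {2..n}"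
    and L\<tau>: "\<And>i. i \<in> {1..n} - {p} \<Longrightarrow> L i = (if i \<le> p + 1 then {1, \<tau> i} else {\<tau> i})"
    using L by (rule W_outputE) blast
  define \<pi> where "\<pi> j = (if j = 1 then 1 else if j \<le> p then \<tau> (j - 1) else \<tau> j)" for j
  have labels: "apply_circuit L (CX p (p + 1) @ DX_chain_down p) j = {\<pi> j}" if "j \<in> {1..n}" for j
    unfolding \<pi>_def by (rule apply_CX_DX_chain_down[OF Lp \<tau> L\<tau> p that])
  have range: "\<pi> ` {1..n} \<subseteq> {1..n}"
  proof (rule image_subsetI)
    fix j
    assume j: "j \<in> {1..n}"
    show "\<pi> j \<in> {1..n}"
    proof (cases "j = 1")
      case True
      then show ?thesis
        using p by (simp add: \<pi>_def)
    next
      case False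
      then have "(if j \<le> p then j - 1 else j) \<in> {1..n} - {p}"
        using j by auto
      moreover have "\<pi> j = \<tau> (if j \<le> p then j - 1 else j)"
        using False by (simp add: \<pi>_def)
      ultimately show ?thesis
        using \<tau> by fastforce
    qed
  qed
  show ?thesis
    by (rule that[OF _ range labels]) (simp add: \<pi>_def)
qed

lemma clean_special_gen_step:
  assumes k: "3 \<le> k" and Gp: "\<forall>m\<ge>k - 1. clean_special_gen (k - 1) m (Gp m)" and n: "k \<le> n"
  shows "clean_special_gen k n
    (Wrec Gp k n @ CX (n - k + 1) (n - k + 2) @ mirror 1 (n - k + 1) (PTC (n - k + 1)))"
proof -
  define p where "p = n - k + 1"
  define W where "W = Wrec Gp k n"
  define C where "C = W @ CX p (p + 1) @ DX_chain_down p"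
  have p: "1 \<le> p" "p + 1 \<le> n" "n - k + 2 = p + 1"
    using k n unfolding p_def by auto
  have vW: "valid_circuit n W" and gW: "generates_k_body k n W" and oW: "W_output n p (apply_circuit l0 W)"
    using Wrec_invariant[OF k Gp n] unfolding W_def p_def by blast+
  obtain \<pi> where \<pi>: "\<pi> 1 = 1" "\<pi> ` {1..n} \<subseteq> {1..n}"
    and labels: "\<And>j. j \<in> {1..n} \<Longrightarrow> apply_circuit l0 C j = {\<pi> j}"
    using W_output_untwine[OF oW p(1,2)] unfolding C_def apply_circuit_append by blast
  have vC: "valid_circuit n C"
    unfolding C_def using vW p by (auto intro!: valid_circuit_CX valid_circuit_DX_chain_down)
  then have "outputs_permutation n C \<pi>"
    unfolding outputs_permutation_def using bij_betw_singleton_labels[OF vC labels \<pi>(2)] labels \<pi>(1) by simp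
  moreover have "generates_k_body k n C"
    unfolding C_def by (rule generates_k_body_append_left[OF gW])
  ultimately have "clean_special_gen k n C"
    unfolding clean_special_gen_iff using n vC by blast
  then show ?thesis
    unfolding mirror_PTC C_def W_def p_def p(3)[unfolded p_def] .
qed

lemma clean_special_gen_Gk:
  assumes k0: "2 \<le> k0" and G0: "\<forall>n\<ge>k0. clean_special_gen k0 n (G0 n)" and k: "k0 \<le> k"
  shows "\<forall>n\<ge>k. clean_special_gen k n (Gk k0 G0 k n)"
  using k
proof (induction k rule: dec_induct)
  case base
  then show ?case
    using G0 by (simp add: Gk_le)
next
  case (step k)
  then show ?case
    using clean_special_gen_step[of "Suc k" "Gk k0 G0 k"] k0 by (simp add: Gk_gt)
qed

section \<open>Sums of powers\<close>

lemma power_Suc_lower_bound: "(n::nat) ^ (d + 1) + (d + 1) * n ^ d \<le> (n + 1) ^ (d + 1)"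
proof (induction d)
  case 0
  then show ?case
    by simp
next
  case (Suc d)
  have "n ^ (Suc d + 1) + (Suc d + 1) * n ^ Suc d \<le> (n + 1) * (n ^ (d + 1) + (d + 1) * n ^ d)"
    by (simp add: algebra_simps)
  also have "\<dots> \<le> (n + 1) * (n + 1) ^ (d + 1)"
    using Suc.IH by (rule mult_le_mono2)
  finally show ?case
    by simp
qed

lemma power_Suc_upper_bound: "((n::nat) + 1) ^ (d + 1) \<le> n ^ (d + 1) + (d + 1) * (n + 1) ^ d"
proof (induction d)
  case 0
  then show ?case
    by simp
next
  case (Suc d)
  have "(n + 1) ^ (Suc d + 1) = (n + 1) * (n + 1) ^ (d + 1)"
    by simp
  also have "\<dots> \<le> (n + 1) * (n ^ (d + 1) + (d + 1) * (n + 1) ^ d)"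
    using Suc.IH by (rule mult_le_mono2)
  also have "\<dots> = n ^ (d + 2) + n ^ (d + 1) + (d + 1) * (n + 1) ^ (d + 1)"
    by (simp add: algebra_simps)
  also have "\<dots> \<le> n ^ (d + 2) + (n + 1) ^ (d + 1) + (d + 1) * (n + 1) ^ (d + 1)"
    using power_mono[of n "n + 1" "d + 1"] by simp
  finally show ?case
    by simp
qed

lemma sum_powers_bounds:
  "(d + 1) * (\<Sum>m<n. m ^ d) \<le> (n::nat) ^ (d + 1) \<and>
   n ^ (d + 1) \<le> (d + 1) * (\<Sum>m<n. m ^ d) + (d + 1) * n ^ d"
proof (induction n)
  case 0
  then show ?case
    by simp
next
  case (Suc n)
  then show ?case
    using power_Suc_lower_bound[of n d] power_Suc_upper_bound[of n d] by (simp add: algebra_simps)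
qed

lemma sum_powers_approx: "\<bar>(\<Sum>m<n. real m ^ d) - real n ^ (d + 1) / real (d + 1)\<bar> \<le> real n ^ d"
proof -
  have "real ((d + 1) * (\<Sum>m<n. m ^ d)) \<le> real (n ^ (d + 1))"
    "real (n ^ (d + 1)) \<le> real ((d + 1) * (\<Sum>m<n. m ^ d) + (d + 1) * n ^ d)"
    using sum_powers_bounds[of d n] by (simp_all only: of_nat_le_iff)
  then have "real (d + 1) * (\<Sum>m<n. real m ^ d) \<le> real n ^ (d + 1)"
    "real n ^ (d + 1) \<le> real (d + 1) * ((\<Sum>m<n. real m ^ d) + real n ^ d)"
    by (simp_all add: algebra_simps)
  then have "(\<Sum>m<n. real m ^ d) \<le> real n ^ (d + 1) / real (d + 1)"
    "real n ^ (d + 1) / real (d + 1) \<le> (\<Sum>m<n. real m ^ d) + real n ^ d"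
    by (simp_all add: field_simps)
  then show ?thesis
    by linarith
qed

lemma sum_powers_le: "(\<Sum>m<n. real m ^ e) \<le> real n ^ Suc e"
proof -
  have "(\<Sum>m<n. real m ^ e) \<le> (\<Sum>m<n. real n ^ e)"
    by (rule sum_mono) (simp add: power_mono)
  then show ?thesis
    by simp
qed

lemma bigo_real_power_mono:
  assumes "d \<le> e"
  shows "(\<lambda>n. real n ^ d) \<in> O(\<lambda>n. real n ^ e)"
proof (rule bigoI[where c = 1])
  show "eventually (\<lambda>n. norm (real n ^ d) \<le> 1 * norm (real n ^ e)) at_top"
    using eventually_ge_at_top[of "1::nat"]
    by eventually_elim (use assms in \<open>simp add: power_increasing\<close>)
qed

lemma const_in_bigo_real: "(\<lambda>_. c) \<in> O(\<lambda>n. real n)"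
proof (rule bigoI[where c = "\<bar>c\<bar>"])
  show "eventually (\<lambda>n. norm c \<le> \<bar>c\<bar> * norm (real n)) at_top"
    using eventually_ge_at_top[of "1::nat"]
    by eventually_elim (simp add: mult_le_cancel_left1)
qed

lemma sum_in_bigo_power:
  fixes h :: "nat \<Rightarrow> real"
  assumes "h \<in> O(\<lambda>m. real m ^ e)"
  shows "(\<lambda>n. \<Sum>m<n. h m) \<in> O(\<lambda>n. real n ^ Suc e)"
proof -
  obtain C where C: "C > 0" and "eventually (\<lambda>m. norm (h m) \<le> C * norm (real m ^ e)) at_top"
    using landau_o.bigE[OF assms] by blast
  then obtain N where N: "\<And>m. N \<le> m \<Longrightarrow> \<bar>h m\<bar> \<le> C * real m ^ e"
    unfolding eventually_at_top_linorder by auto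
  define A where "A = (\<Sum>m<N. \<bar>h m\<bar>)"
  have A: "0 \<le> A"
    unfolding A_def by (simp add: sum_nonneg)
  have h_bound: "\<bar>h m\<bar> \<le> A + C * real m ^ e" for m
  proof (cases "m < N")
    case True
    then have "\<bar>h m\<bar> \<le> A"
      unfolding A_def by (intro member_le_sum) auto
    then show ?thesis
      using C by (simp add: add_increasing2)
  next
    case False
    then show ?thesis
      using N[of m] A by simp
  qed
  have "\<bar>\<Sum>m<n. h m\<bar> \<le> (A + C) * real n ^ Suc e" if "1 \<le> n" for n
  proof -
    have "\<bar>\<Sum>m<n. h m\<bar> \<le> (\<Sum>m<n. A + C * real m ^ e)"
      by (rule order_trans[OF sum_abs sum_mono]) (rule h_bound)
    also have "\<dots> = real n * A + C * (\<Sum>m<n. real m ^ e)"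
      by (simp add: sum.distrib sum_distrib_left)
    also have "\<dots> \<le> real n ^ Suc e * A + C * real n ^ Suc e"
      using sum_powers_le[where n = n and e = e] C A that
      by (intro add_mono mult_right_mono mult_left_mono) (simp_all add: power_increasing[of 1 "Suc e", simplified])
    finally show ?thesis
      by (simp add: algebra_simps)
  qed
  then show ?thesis
    by (intro bigoI[where c = "A + C"] eventually_mono[OF eventually_ge_at_top[of 1]]) simp
qed

lemma sum_asymptotics:
  fixes g :: "nat \<Rightarrow> real"
  assumes "(\<lambda>m. g m - c * real m ^ Suc d) \<in> O(\<lambda>m. real m ^ d)"
  shows "(\<lambda>n. (\<Sum>m<n. g m) - c / real (d + 2) * real n ^ (d + 2)) \<in> O(\<lambda>n. real n ^ Suc d)"
proof -
  have "(\<lambda>n. \<Sum>m<n. g m - c * real m ^ Suc d) \<in> O(\<lambda>n. real n ^ Suc d)"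
    using sum_in_bigo_power[OF assms] .
  moreover have "(\<lambda>n. c * ((\<Sum>m<n. real m ^ Suc d) - real n ^ (Suc d + 1) / real (Suc d + 1)))
      \<in> O(\<lambda>n. real n ^ Suc d)"
  proof (rule bigoI[where c = "\<bar>c\<bar>"])
    show "eventually (\<lambda>n. norm (c * ((\<Sum>m<n. real m ^ Suc d) - real n ^ (Suc d + 1) / real (Suc d + 1)))
        \<le> \<bar>c\<bar> * norm (real n ^ Suc d)) at_top"
      using sum_powers_approx[of "Suc d"] by (simp add: abs_mult mult_left_mono)
  qed
  ultimately have "(\<lambda>n. (\<Sum>m<n. g m - c * real m ^ Suc d) +
      c * ((\<Sum>m<n. real m ^ Suc d) - real n ^ (Suc d + 1) / real (Suc d + 1))) \<in> O(\<lambda>n. real n ^ Suc d)"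
    by (rule sum_in_bigo)
  moreover have "(\<Sum>m<n. g m - c * real m ^ Suc d) +
      c * ((\<Sum>m<n. real m ^ Suc d) - real n ^ (Suc d + 1) / real (Suc d + 1)) =
      (\<Sum>m<n. g m) - c / real (d + 2) * real n ^ (d + 2)" for n
    by (simp add: sum_subtractf sum_distrib_left algebra_simps)
  ultimately show ?thesis
    by simp
qed

lemma recurrence_asymptotics:
  fixes F g :: "nat \<Rightarrow> real"
  assumes F: "(\<lambda>n. F n - (\<Sum>m\<in>{k..<n}. g m)) \<in> O(\<lambda>n. real n)"
    and g: "(\<lambda>m. g m - c * real m ^ Suc d) \<in> O(\<lambda>m. real m ^ d)"
  shows "(\<lambda>n. F n - c / real (d + 2) * real n ^ (d + 2)) \<in> O(\<lambda>n. real n ^ Suc d)"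
proof -
  have "eventually (\<lambda>n. F n - (\<Sum>m\<in>{k..<n}. g m) - (\<Sum>m<k. g m) = F n - (\<Sum>m<n. g m)) at_top"
    using eventually_ge_at_top[of k]
  proof eventually_elim
    case (elim n)
    have "(\<Sum>m\<in>{0..<n}. g m) = (\<Sum>m\<in>{0..<k}. g m) + (\<Sum>m\<in>{k..<n}. g m)"
      using elim by (intro sum.atLeastLessThan_concat[symmetric]) auto
    then show ?case
      by (simp add: lessThan_atLeast0)
  qed
  moreover have "(\<lambda>n. F n - (\<Sum>m\<in>{k..<n}. g m) - (\<Sum>m<k. g m)) \<in> O(\<lambda>n. real n)"
    using F const_in_bigo_real by (rule sum_in_bigo)
  ultimately have "(\<lambda>n. F n - (\<Sum>m<n. g m)) \<in> O(\<lambda>n. real n)"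
    by (subst (asm) landau_o.big.in_cong)
  then have "(\<lambda>n. F n - (\<Sum>m<n. g m)) \<in> O(\<lambda>n. real n ^ Suc d)"
    by (rule landau_o.big_trans) (use bigo_real_power_mono[of 1 "Suc d"] in simp)
  then have "(\<lambda>n. (F n - (\<Sum>m<n. g m)) + ((\<Sum>m<n. g m) - c / real (d + 2) * real n ^ (d + 2)))
      \<in> O(\<lambda>n. real n ^ Suc d)"
    using sum_asymptotics[OF g] by (rule sum_in_bigo)
  then show ?thesis
    by simp
qed

lemma linear_in_bigo_real: "(\<lambda>n. real (a * (n - k) + b)) \<in> O(\<lambda>n. real n)"
proof (rule bigoI[where c = "real (a + b)"])
  show "eventually (\<lambda>n. norm (real (a * (n - k) + b)) \<le> real (a + b) * norm (real n)) at_top"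
    using eventually_ge_at_top[of "1::nat"]
  proof eventually_elim
    case (elim n)
    have "a * (n - k) \<le> a * n" "b \<le> b * n"
      using elim by simp_all
    then have "a * (n - k) + b \<le> a * n + b * n"
      by (rule add_mono)
    then have "norm (real (a * (n - k) + b)) \<le> real (a * n + b * n)"
      unfolding norm_of_nat of_nat_le_iff .
    also have "\<dots> = real (a + b) * norm (real n)"
      by (simp add: algebra_simps)
    finally show ?case .
  qed
qed

lemma bigo_powr_iff_power: "f \<in> O(\<lambda>n. real n powr real e) \<longleftrightarrow> f \<in> O(\<lambda>n. real n ^ e)"
proof -
  have "eventually (\<lambda>n. real n powr real e = real n ^ e) at_top"
    using eventually_ge_at_top[of "1::nat"] by eventually_elim (simp add: powr_realpow)
  then show ?thesis
    by (simp add: landau_o.big.cong)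
qed

section \<open>Size and depth\<close>

text \<open>Size and depth satisfy the same recurrence: both sum a cost over the moments, namely \<open>card\<close>
  and \<open>\<lambda>_. 1\<close>.\<close>

definition moment_cost :: "(moment \<Rightarrow> nat) \<Rightarrow> circuit \<Rightarrow> nat" where
  "moment_cost f C = (\<Sum>M\<leftarrow>C. f M)"

lemma csize_eq_moment_cost: "csize C = moment_cost card C"
  by (simp add: csize_def moment_cost_def)

lemma depth_eq_moment_cost: "depth C = moment_cost (\<lambda>_. 1) C"
  by (induction C) (simp_all add: depth_def moment_cost_def)

lemma moment_cost_append: "moment_cost f (A @ B) = moment_cost f A + moment_cost f B"
  by (simp add: moment_cost_def)

lemma moment_cost_concat: "moment_cost f (concat (map g xs)) = (\<Sum>x\<leftarrow>xs. moment_cost f (g x))"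
  by (induction xs) (simp_all add: moment_cost_append, simp add: moment_cost_def)

locale gate_cost =
  fixes f :: "moment \<Rightarrow> nat"
  assumes cost_single: "f {g} = 1"
    and cost_shift_moment: "f (shift_moment q M) = f M"
begin

lemma cost_CX [simp]: "moment_cost f (CX i j) = 1"
  by (simp add: moment_cost_def CX_def cost_single)

lemma cost_SW [simp]: "moment_cost f (SW i j) = 3"
  by (simp add: SW_def moment_cost_append)

lemma cost_DX_chain_down: "moment_cost f (DX_chain_down p) = 2 * (p - 1)"
  by (simp add: DX_chain_down_def moment_cost_concat DX_def moment_cost_append sum_list_triv)

lemma cost_shift: "1 \<le> p \<Longrightarrow> moment_cost f (shift p C) = moment_cost f C"
  by (simp add: shift_eq_map_shift_moment moment_cost_def o_def cost_shift_moment)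

lemma cost_Wrec:
  assumes "1 \<le> k" "k \<le> n"
  shows "moment_cost f (Wrec Gp k n) = (\<Sum>m\<in>{k - 1..<n}. moment_cost f (Gp m)) + 4 * (n - k) + 1"
  using assms(2)
proof (induction n rule: dec_induct)
  case base
  have "{k - 1..<k} = {k - 1}"
    using assms(1) by auto
  then show ?case
    by (simp add: Wrec_le head_block_def moment_cost_append cost_shift)
next
  case (step n)
  have "moment_cost f (Wrec Gp k (Suc n)) = 1 + moment_cost f (Gp n) + 3 + moment_cost f (Wrec Gp k n)"
    using step.hyps by (simp add: Wrec_gt head_block_def moment_cost_append cost_shift)
  moreover have "(\<Sum>m\<in>{k - 1..<Suc n}. moment_cost f (Gp m)) =
      (\<Sum>m\<in>{k - 1..<n}. moment_cost f (Gp m)) + moment_cost f (Gp n)"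
    using step.hyps by (intro sum.atLeastLessThan_Suc) simp
  ultimately show ?case
    using step by simp
qed

lemma cost_Gk:
  assumes "k0 < k" "k \<le> n"
  shows "moment_cost f (Gk k0 G0 k n) =
    (\<Sum>m\<in>{k - 1..<n}. moment_cost f (Gk k0 G0 (k - 1) m)) + 6 * (n - k) + 2"
  using assms unfolding Gk_gt[OF assms(1)] mirror_PTC
  by (simp add: moment_cost_append cost_Wrec cost_DX_chain_down)


lemma cost_Gk_asymptotics:
  fixes c :: real
  assumes G0: "(\<lambda>n. real (moment_cost f (G0 n)) - c * real n ^ Suc d) \<in> O(\<lambda>n. real n ^ d)"
    and k: "k0 \<le> k"
  shows "(\<lambda>n. real (moment_cost f (Gk k0 G0 k n))
      - c * (fact (Suc d) / fact (Suc d + (k - k0))) * real n ^ Suc (d + (k - k0)))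
    \<in> O(\<lambda>n. real n ^ (d + (k - k0)))"
  using k
proof (induction k rule: dec_induct)
  case base
  then show ?case
    using G0 by (simp add: Gk_le)
next
  case (step k)
  let ?e = "d + (k - k0)"
  let ?c = "c * (fact (Suc d) / fact (Suc d + (k - k0)))"
  have "eventually (\<lambda>n. real (6 * (n - Suc k) + 2) = real (moment_cost f (Gk k0 G0 (Suc k) n))
      - (\<Sum>m\<in>{k..<n}. real (moment_cost f (Gk k0 G0 k m)))) at_top"
    using eventually_ge_at_top[of "Suc k"]
    by eventually_elim (use step.hyps in \<open>simp add: cost_Gk\<close>)
  moreover have "(\<lambda>n. real (6 * (n - Suc k) + 2)) \<in> O(\<lambda>n. real n)"
    by (rule linear_in_bigo_real)
  ultimately have F: "(\<lambda>n. real (moment_cost f (Gk k0 G0 (Suc k) n))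
      - (\<Sum>m\<in>{k..<n}. real (moment_cost f (Gk k0 G0 k m)))) \<in> O(\<lambda>n. real n)"
    by (subst (asm) landau_o.big.in_cong)
  have asymp: "(\<lambda>n. real (moment_cost f (Gk k0 G0 (Suc k) n)) - ?c / real (?e + 2) * real n ^ (?e + 2))
      \<in> O(\<lambda>n. real n ^ Suc ?e)"
    using recurrence_asymptotics[OF F step.IH] .
  have e2: "?e + 2 = Suc (d + (Suc k - k0))" and e3: "Suc ?e = d + (Suc k - k0)"
    using step.hyps by (simp_all add: Suc_diff_le)
  have "Suc d + (Suc k - k0) = Suc (Suc d + (k - k0))"
    using step.hyps by (simp add: Suc_diff_le)
  then have e1: "?c / real (Suc (d + (Suc k - k0))) = c * (fact (Suc d) / fact (Suc d + (Suc k - k0)))"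
    by (simp add: fact_Suc[of "Suc d + (k - k0)"] field_simps)
  show ?case
    using asymp[unfolded e2, unfolded e1, unfolded e3] .
qed

end

interpretation csize_cost: gate_cost card
proof
  show "card (shift_moment q M) = card M" for q M
    unfolding shift_moment_def by (rule card_image) (auto simp: inj_on_def)
qed simp

interpretation depth_cost: gate_cost "\<lambda>_. 1"
  by unfold_locales simp_all

lemma Gk_asymptotics:
  fixes c1 c2 :: real
  assumes k0: "3 \<le> k0" and k: "k0 \<le> k"
    and size: "(\<lambda>n. real (csize (G0 n)) - c1 * real n ^ (k0 - 1)) \<in> O(\<lambda>n. real n powr (real k0 - 2))"
    and depth: "(\<lambda>n. real (depth (G0 n)) - c2 * real n ^ (k0 - 2)) \<in> O(\<lambda>n. real n powr (real k0 - 3))"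
  shows "(\<lambda>n. real (csize (Gk k0 G0 k n)) - c1 * (fact (k0 - 1) / fact (k - 1)) * real n ^ (k - 1))
           \<in> O(\<lambda>n. real n powr (real k - 2))"
    and "(\<lambda>n. real (depth (Gk k0 G0 k n)) - c2 * (fact (k0 - 2) / fact (k - 2)) * real n ^ (k - 2))
           \<in> O(\<lambda>n. real n powr (real k - 3))"
proof -
  have a: "k0 - 1 = Suc (k0 - 2)" "real k0 - 2 = real (k0 - 2)"
    "Suc (k0 - 2) + (k - k0) = k - 1" "Suc (k0 - 2 + (k - k0)) = k - 1"
    "k0 - 2 + (k - k0) = k - 2" "real k - 2 = real (k - 2)"
    using k0 k by auto
  show "(\<lambda>n. real (csize (Gk k0 G0 k n)) - c1 * (fact (k0 - 1) / fact (k - 1)) * real n ^ (k - 1))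
      \<in> O(\<lambda>n. real n powr (real k - 2))"
    using csize_cost.cost_Gk_asymptotics[OF size[unfolded a(1,2) bigo_powr_iff_power csize_eq_moment_cost] k]
    unfolding a(3,4) unfolding a(1,5,6) bigo_powr_iff_power csize_eq_moment_cost .
  have b: "k0 - 2 = Suc (k0 - 3)" "real k0 - 3 = real (k0 - 3)"
    "Suc (k0 - 3) + (k - k0) = k - 2" "Suc (k0 - 3 + (k - k0)) = k - 2"
    "k0 - 3 + (k - k0) = k - 3" "real k - 3 = real (k - 3)"
    using k0 k by auto
  show "(\<lambda>n. real (depth (Gk k0 G0 k n)) - c2 * (fact (k0 - 2) / fact (k - 2)) * real n ^ (k - 2))
      \<in> O(\<lambda>n. real n powr (real k - 3))"
    using depth_cost.cost_Gk_asymptotics[OF depth[unfolded b(1,2) bigo_powr_iff_power depth_eq_moment_cost] k]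
    unfolding b(3,4) unfolding b(1,5,6) bigo_powr_iff_power depth_eq_moment_cost .
qed

section \<open>The case \<open>k\<^sub>0 = 2\<close>\<close>

lemma card_carriers_apply_moment:
  assumes M: "valid_moment n M"
  shows "card {j\<in>{1..n}. x \<in> apply_moment l M j} \<le> 2 * card {j\<in>{1..n}. x \<in> l j}"
proof -
  define B where "B = {j\<in>{1..n}. x \<in> l j}"
  define X where "X = {g\<in>M. fst g \<in> B}"
  have finB: "finite B" and finX: "finite X"
    unfolding B_def X_def using finite_valid_moment[OF M] by simp_all
  have sub: "{j\<in>{1..n}. x \<in> apply_moment l M j} \<subseteq> B \<union> snd ` X"
  proof
    fix j
    assume j: "j \<in> {j\<in>{1..n}. x \<in> apply_moment l M j}"
    show "j \<in> B \<union> snd ` X"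
    proof (cases "\<exists>i. (i, j) \<in> M")
      case True
      then obtain i where i: "(i, j) \<in> M"
        by blast
      have "x \<in> symd (l i) (l j)"
        using j apply_moment_gate[OF M i] by simp
      then have "x \<in> l i \<or> x \<in> l j"
        by (auto simp: symd_def)
      moreover have "i \<in> {1..n}"
        using valid_moment_gateD[OF M i] by simp
      ultimately have "j \<in> B \<or> (i, j) \<in> X"
        using i j unfolding B_def X_def by auto
      moreover have "(i, j) \<in> X \<Longrightarrow> j \<in> snd ` X"
        by (rule image_eqI[of _ _ "(i, j)"]) simp_all
      ultimately show ?thesis
        by blast
    next
      case False
      then show ?thesis
        using j unfolding B_def by (simp add: apply_moment_no_gate)
    qed
  qed
  have "inj_on fst X"
    using valid_moment_inj_on_fst[OF M] unfolding X_def by (rule inj_on_subset) blast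
  then have "card (snd ` X) \<le> card B"
    using card_image_le[OF finX, of snd] card_mono[OF finB, of "fst ` X"]
    unfolding X_def by (simp add: card_image image_subset_iff)
  moreover have "card {j\<in>{1..n}. x \<in> apply_moment l M j} \<le> card B + card (snd ` X)"
    using card_mono[OF _ sub] card_Un_le[of B "snd ` X"] finB finX by simp
  ultimately show ?thesis
    unfolding B_def by linarith
qed

lemma card_carriers_apply_circuit:
  "valid_circuit n C \<Longrightarrow>
    card {j\<in>{1..n}. x \<in> apply_circuit l C j} \<le> 2 ^ length C * card {j\<in>{1..n}. x \<in> l j}"
proof (induction C arbitrary: l)
  case Nil
  then show ?case
    by simp
next
  case (Cons M C)
  then have M: "valid_moment n M" and C: "valid_circuit n C"
    by (auto simp: valid_circuit_def)
  have "card {j\<in>{1..n}. x \<in> apply_circuit l (M # C) j}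
      \<le> 2 ^ length C * card {j\<in>{1..n}. x \<in> apply_moment l M j}"
    using Cons.IH[OF C] by (simp add: apply_circuit_Cons)
  also have "\<dots> \<le> 2 ^ length C * (2 * card {j\<in>{1..n}. x \<in> l j})"
    using card_carriers_apply_moment[OF M] by simp
  finally show ?case
    by simp
qed

text \<open>After \<open>t\<close> moments at most \<open>2\<^sup>t\<close> qubits carry a label containing 1, so a circuit of depth
  \<open>D\<close> generates at most \<open>D 2\<^sup>D\<close> such labels, while a 2-body generator must produce the \<open>n - 1\<close>
  labels \<open>{1, i}\<close>.\<close>

lemma card_labels_containing_1:
  fixes t :: nat
  assumes C: "valid_circuit n C" and n: "1 \<le> n"
  defines "L \<equiv> apply_circuit l0 (take t C)"
  shows "card (L ` {j\<in>{1..n}. 1 \<in> L j}) \<le> 2 ^ depth C"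
proof -
  have "card (L ` {j\<in>{1..n}. 1 \<in> L j}) \<le> card {j\<in>{1..n}. 1 \<in> L j}"
    by (rule card_image_le) simp
  also have "\<dots> \<le> 2 ^ length (take t C) * card {j\<in>{1..n}. 1 \<in> l0 j}"
    unfolding L_def by (rule card_carriers_apply_circuit[OF valid_circuit_take[OF C]])
  also have "{j\<in>{1..n}. 1 \<in> l0 j} = {1}"
    using n by auto
  also have "2 ^ length (take t C) * card {1::nat} \<le> 2 ^ depth C"
    by (simp add: depth_def power_increasing)
  finally show ?thesis .
qed

lemma two_body_generator_depth_bound:
  assumes C: "clean_special_gen 2 n C"
  shows "n - 1 \<le> depth C * 2 ^ depth C"
proof -
  define lab where "lab t = apply_circuit l0 (take t C)" for t
  define carried where "carried t = lab t ` {j\<in>{1..n}. 1 \<in> lab t j}" for t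
  have card_carried: "card (carried t) \<le> 2 ^ depth C" for t
    using card_labels_containing_1[OF clean_special_gen_valid[OF C], of t] C
    unfolding carried_def lab_def clean_special_gen_def by simp
  have "(\<lambda>i. {1, i}) ` {2..n} \<subseteq> (\<Union>t\<in>{1..depth C}. carried t)"
  proof
    fix y
    assume "y \<in> (\<lambda>i. {1, i}) ` {2..n}"
    then obtain i where i: "i \<in> {2..n}" "y = {1, i}"
      by blast
    have "generates n C l0 (insert 1 {i})"
      using C i(1) by (intro clean_special_gen_generates) auto
    then obtain t where t: "t \<in> {1..depth C}" and "\<exists>j\<in>{1..n}. insert 1 {i} = lab t j"
      unfolding generates_def lab_def by (rule bexE)
    then obtain j where j: "j \<in> {1..n}" and y: "y = lab t j"
      using i(2) by (elim bexE) simp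
    moreover have "1 \<in> lab t j"
      using y i(2) by (metis insertI1)
    ultimately have "y \<in> carried t"
      unfolding carried_def by (intro image_eqI[of _ _ j]) simp_all
    then show "y \<in> (\<Union>t\<in>{1..depth C}. carried t)"
      using t by (rule UN_I[rotated])
  qed
  then have "card ((\<lambda>i. {1::nat, i}) ` {2..n}) \<le> card (\<Union>t\<in>{1..depth C}. carried t)"
    by (rule card_mono[rotated]) (simp add: carried_def)
  also have "\<dots> \<le> (\<Sum>t\<in>{1..depth C}. card (carried t))"
    by (rule card_UN_le) simp
  also have "\<dots> \<le> depth C * 2 ^ depth C"
    using sum_mono[of "{1..depth C}" "\<lambda>t. card (carried t)" "\<lambda>_. 2 ^ depth C"] card_carried by simp
  finally show ?thesis
    by (simp add: card_image inj_on_def doubleton_eq_iff)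
qed

lemma two_body_generators_depth_unbounded:
  assumes G0: "\<forall>n\<ge>2. clean_special_gen 2 n (G0 n)"
  shows "\<not> (\<exists>B. eventually (\<lambda>n. real (depth (G0 n)) \<le> B) at_top)"
proof
  assume "\<exists>B. eventually (\<lambda>n. real (depth (G0 n)) \<le> B) at_top"
  then obtain B N where N: "\<And>n. N \<le> n \<Longrightarrow> real (depth (G0 n)) \<le> B"
    unfolding eventually_at_top_linorder by blast
  define D where "D = nat \<lceil>B\<rceil>"
  define n where "n = max N (D * 2 ^ D + 2)"
  have "depth (G0 n) \<le> D"
    using N[of n] unfolding n_def D_def by linarith
  then have "depth (G0 n) * 2 ^ depth (G0 n) \<le> D * 2 ^ D"
    by (intro mult_le_mono power_increasing) simp_all
  moreover have "n - 1 \<le> depth (G0 n) * 2 ^ depth (G0 n)"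
    using G0 by (intro two_body_generator_depth_bound) (simp add: n_def)
  ultimately show False
    unfolding n_def by simp
qed

lemma eventually_bounded_of_bigo_powr:
  fixes f :: "nat \<Rightarrow> real"
  assumes "f \<in> O(\<lambda>n. real n powr a)" "a \<le> 0"
  shows "\<exists>B. eventually (\<lambda>n. f n \<le> B) at_top"
proof -
  obtain C where "C > 0" and ev: "eventually (\<lambda>n. norm (f n) \<le> C * norm (real n powr a)) at_top"
    using landau_o.bigE[OF assms(1)] by blast
  have "eventually (\<lambda>n. f n \<le> C) at_top"
    using ev eventually_ge_at_top[of "1::nat"]
  proof eventually_elim
    case (elim n)
    have "real n powr a \<le> 1"
      using powr_mono[of a 0 "real n"] elim(2) assms(2) by simp
    then have "C * norm (real n powr a) \<le> C"
      using \<open>C > 0\<close> by simp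
    then show ?case
      using elim(1) by simp
  qed
  then show ?thesis
    by blast
qed

lemma two_body_generators_depth_not_bigo:
  assumes G0: "\<forall>n\<ge>2. clean_special_gen 2 n (G0 n)" and a: "a \<le> 0"
  shows "(\<lambda>n. real (depth (G0 n)) - c) \<notin> O(\<lambda>n. real n powr a)"
proof
  assume "(\<lambda>n. real (depth (G0 n)) - c) \<in> O(\<lambda>n. real n powr a)"
  then obtain B where "eventually (\<lambda>n. real (depth (G0 n)) - c \<le> B) at_top"
    using eventually_bounded_of_bigo_powr[OF _ a] by blast
  then have "eventually (\<lambda>n. real (depth (G0 n)) \<le> B + c) at_top"
    by (rule eventually_mono) simp
  then show False
    using two_body_generators_depth_unbounded[OF G0] by blast
qed

theorem mainTheorem4:
  fixes k0 :: nat and G0 :: "nat \<Rightarrow> circuit"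
  assumes "k0 \<ge> 2"
    and "\<forall>n\<ge>k0. clean_special_gen k0 n (G0 n)"
  shows "(\<forall>k\<ge>k0. \<forall>n\<ge>k. clean_special_gen k n (Gk k0 G0 k n)) \<and>
         (\<forall>c1 c2 :: real. c1 > 0 \<longrightarrow> c2 > 0 \<longrightarrow>
            (\<lambda>n. real (csize (G0 n)) - c1 * real n ^ (k0 - 1))
               \<in> O[at_top](\<lambda>n. real n powr (real k0 - 2)) \<longrightarrow>
            (\<lambda>n. real (depth (G0 n)) - c2 * real n ^ (k0 - 2))
               \<in> O[at_top](\<lambda>n. real n powr (real k0 - 3)) \<longrightarrow>
            (\<forall>k\<ge>k0.
               (\<lambda>n. real (csize (Gk k0 G0 k n))
                     - c1 * (fact (k0 - 1) / fact (k - 1)) * real n ^ (k - 1))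
                 \<in> O[at_top](\<lambda>n. real n powr (real k - 2)) \<and>
               (\<lambda>n. real (depth (Gk k0 G0 k n))
                     - c2 * (fact (k0 - 2) / fact (k - 2)) * real n ^ (k - 2))
                 \<in> O[at_top](\<lambda>n. real n powr (real k - 3))))"
proof (intro conjI allI impI)
  show "clean_special_gen k n (Gk k0 G0 k n)" if "k0 \<le> k" "k \<le> n" for k n
    using clean_special_gen_Gk[OF assms that(1)] that(2) by blast
  fix c1 c2 :: real and k
  assume size: "(\<lambda>n. real (csize (G0 n)) - c1 * real n ^ (k0 - 1)) \<in> O(\<lambda>n. real n powr (real k0 - 2))"
    and depth: "(\<lambda>n. real (depth (G0 n)) - c2 * real n ^ (k0 - 2)) \<in> O(\<lambda>n. real n powr (real k0 - 3))"
    and k: "k0 \<le> k"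
  txt \<open>For \<open>k\<^sub>0 = 2\<close> the depth hypothesis bounds the depth, so this case is vacuous; it has to be,
    since summing an \<open>O(1/m)\<close> error does not give \<open>O(1)\<close>.\<close>
  have "k0 \<noteq> 2"
  proof
    assume "k0 = 2"
    then show False
      using two_body_generators_depth_not_bigo[of G0 "real k0 - 3" c2] assms(2) depth by simp
  qed
  then have "3 \<le> k0"
    using assms(1) by simp
  then show "(\<lambda>n. real (csize (Gk k0 G0 k n)) - c1 * (fact (k0 - 1) / fact (k - 1)) * real n ^ (k - 1))
        \<in> O(\<lambda>n. real n powr (real k - 2))"
    and "(\<lambda>n. real (depth (Gk k0 G0 k n)) - c2 * (fact (k0 - 2) / fact (k - 2)) * real n ^ (k - 2))
        \<in> O(\<lambda>n. real n powr (real k - 3))"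
    using Gk_asymptotics[OF _ k size depth] by blast+
qed

end
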